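(* Consider the linearized ADM iteration described in the context and suppose that $\mu\geq\sqrt2\max\{\rho_1,\rho_2\}$. Then there exist positive values $\eta^0_U,\eta^0_Q,\eta^0_W,R$, depending only on the initialization, such that whenever $\eta_U>\eta^0_U$, $\eta_Q>\eta^0_Q$, $\eta_W>\eta^0_W$, the sequence $\{\Theta_k=(\Omega_k,U_k,Q_k,W_k,\varepsilon^{(1)}_k,\varepsilon^{(2)}_k,Z^{(1)}_k,Z^{(2)}_k)\}$ satisfies: (1) for $k=0,1,2,\dots$, $\|\Theta_k\|:=\max\{\|\Omega_k\|,\|U_k\|,\|Q_k\|,\|W_k\|,\|\varepsilon^{(1)}_k\|,\|\varepsilon^{(2)}_k\|,\|Z^{(1)}_k\|,\|Z^{(2)}_k\|\}<R$, so the iterates lie in a compact set; (2) every convergent subsequence of $\{\Theta_k\}$ converges to a point of $S$; (3) $\mathrm{dist}(\Theta_k,S)\to0$ as $k\to\infty$, where $\mathrm{dist}(\Theta,S)=\min_{\Theta'\in S}\|\Theta'-\Theta\|$. Here $$S=\Big\{\Theta=(\Omega,U,Q,W,\varepsilon^{(1)},\varepsilon^{(2)},Z^{(1)},Z^{(2)}) \;\Big|\; \|\Theta\|<R,\ -\nabla L_s(\Theta)\in\lambda_1\partial\|U\|_1,\ H=QU+\varepsilon^{(1)},\ Y=WQU+\varepsilon^{(2)}\Big\},$$ with $\|U\|_1$ regarded as a convex function of $\Theta$ constant in all components other than $U$ (so the inclusion means $-\nabla_U L_s(\Theta)\in\lambda_1\partial\|U\|_1$ and all other partial gradients of $L_s$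 vanish).
   Context: Data: $X\in\mathbb{R}^{m\times n}$, $H\in\mathbb{R}^{s\times n}$, $Y\in\mathbb{R}^{c\times n}$; parameters $\lambda_1,\lambda_2,\rho_1,\rho_2,\delta_1,\delta_2,\mu>0$ and step parameters $\eta_U,\eta_Q,\eta_W>0$. Variables: $\Omega\in\mathbb{R}^{r\times m}$, $U\in\mathbb{R}^{r\times n}$, $Q\in\mathbb{R}^{s\times r}$, $W\in\mathbb{R}^{c\times s}$, $\varepsilon^{(1)},Z^{(1)}\in\mathbb{R}^{s\times n}$, $\varepsilon^{(2)},Z^{(2)}\in\mathbb{R}^{c\times n}$. Matrix norms are Frobenius norms, $\langle A,B\rangle=\mathrm{tr}(A^TB)$, $\|U\|_1=\sum_{ij}|U_{ij}|$. The Lagrangian is $L(\Omega,U,Q,W,\varepsilon^{(1)},\varepsilon^{(2)},Z^{(1)},Z^{(2)})=\frac12\|U-\Omega X\|_F^2+\lambda_1\|U\|_1+\frac{\rho_1}{2}\|\varepsilon^{(1)}\|^2+\frac{\rho_2}{2}\|\varepsilon^{(2)}\|^2+\langle Z^{(1)},H-QU-\varepsilon^{(1)}\rangle+\langle Z^{(2)},Y-WQU-\varepsilon^{(2)}\rangle+\frac{\mu}{2}\|H-QU-\varepsilon^{(1)}\|^2+\frac{\mu}{2}\|Y-WQU-\varepsilon^{(2)}\|^2+\frac{\delta_1}{2}\|Q\|^2+\frac{\delta_2}{2}\|W\|^2+\frac{\lambda_2}{2}\|\Omega\|^2$, and $L_s=L-\lambda_1\|U\|_1$ is its smooth part. Let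 $\tau_t$ be entrywise soft thresholding, $\tau_t(x)=\mathrm{sign}(x)\max(|x|-t,0)$. Starting from an initialization $\Theta_0$, for $k=0,1,2,\dots$: $U_{k+1}=\tau_{\lambda_1/(\mu\eta_U)}\big(U_k-\frac{1}{\mu\eta_U}\nabla_U L_s(\Omega_k,U_k,Q_k,W_k,\varepsilon^{(1)}_k,\varepsilon^{(2)}_k,Z^{(1)}_k,Z^{(2)}_k)\big)$; $Q_{k+1}=Q_k-\frac{1}{\mu\eta_Q}\nabla_Q L(\Omega_k,U_{k+1},Q_k,W_k,\varepsilon^{(1)}_k,\varepsilon^{(2)}_k,Z^{(1)}_k,Z^{(2)}_k)$; $W_{k+1}=W_k-\frac{1}{\mu\eta_W}\nabla_W L(\Omega_k,U_{k+1},Q_{k+1},W_k,\varepsilon^{(1)}_k,\varepsilon^{(2)}_k,Z^{(1)}_k,Z^{(2)}_k)$; $\Omega_{k+1}=\arg\min_\Omega L(\Omega,U_{k+1},Q_{k+1},W_{k+1},\varepsilon^{(1)}_k,\varepsilon^{(2)}_k,Z^{(1)}_k,Z^{(2)}_k)$; $\varepsilon^{(1)}_{k+1}=\arg\min_{\varepsilon^{(1)}} L(\Omega_{k+1},U_{k+1},Q_{k+1},W_{k+1},\varepsilon^{(1)},\varepsilon^{(2)}_k,Z^{(1)}_k,Z^{(2)}_k)$; $\varepsilon^{(2)}_{k+1}=\arg\min_{\varepsilon^{(2)}} L(\Omega_{k+1},U_{k+1},Q_{k+1},W_{k+1},\varepsilon^{(1)}_{k+1},\varepsilon^{(2)},Z^{(1)}_k,Z^{(2)}_k)$;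 $Z^{(1)}_{k+1}=Z^{(1)}_k+\mu(H-Q_{k+1}U_{k+1}-\varepsilon^{(1)}_{k+1})$; $Z^{(2)}_{k+1}=Z^{(2)}_k+\mu(Y-W_{k+1}Q_{k+1}U_{k+1}-\varepsilon^{(2)}_{k+1})$. *)

theory Defs
  imports "HOL-Analysis.Analysis"
begin

text \<open>Matrices are rendered as real^'cols^'rows (A $ i $ j is entry (i,j));
  the library norm on this type is the Frobenius norm, inner is tr(A^T B),
  and ** is the matrix product.\<close>

definition grad :: "('a::real_inner \<Rightarrow> real) \<Rightarrow> 'a \<Rightarrow> 'a" where
  "grad f x = (THE D. GDERIV f x :> D)"

definition subdiff :: "('a::real_inner \<Rightarrow> real) \<Rightarrow> 'a \<Rightarrow> 'a set" where
  "subdiff f x = {g. \<forall>y. f x + inner g (y - x) \<le> f y}"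

definition l1norm :: "real^'n^'m \<Rightarrow> real" where
  "l1norm A = (\<Sum>i\<in>UNIV. \<Sum>j\<in>UNIV. \<bar>A $ i $ j\<bar>)"

definition soft :: "real \<Rightarrow> real^'n^'m \<Rightarrow> real^'n^'m" where
  "soft t A = (\<chi> i j. sgn (A $ i $ j) * max (\<bar>A $ i $ j\<bar> - t) 0)"

text \<open>Smooth part L_s of the Lagrangian. Arguments:
  X H Y (data), l2 = lambda_2, r1 r2 = rho, d1 d2 = delta, mu; then
  Omega U Q W e1 e2 Z1 Z2.\<close>
definition Ls :: "real^'n^'m \<Rightarrow> real^'n^'s \<Rightarrow> real^'n^'c \<Rightarrow> real \<Rightarrow> real \<Rightarrow> real \<Rightarrow>
    real \<Rightarrow> real \<Rightarrow> real \<Rightarrow>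
    real^'m^'r \<Rightarrow> real^'n^'r \<Rightarrow> real^'r^'s \<Rightarrow> real^'s^'c \<Rightarrow>
    real^'n^'s \<Rightarrow> real^'n^'c \<Rightarrow> real^'n^'s \<Rightarrow> real^'n^'c \<Rightarrow> real" where
  "Ls X H Y l2 r1 r2 d1 d2 mu Om U Q W e1 e2 Z1 Z2 =
     (1/2) * (norm (U - Om ** X))\<^sup>2
     + (r1/2) * (norm e1)\<^sup>2 + (r2/2) * (norm e2)\<^sup>2
     + inner Z1 (H - Q ** U - e1) + inner Z2 (Y - W ** Q ** U - e2)
     + (mu/2) * (norm (H - Q ** U - e1))\<^sup>2
     + (mu/2) * (norm (Y - W ** Q ** U - e2))\<^sup>2
     + (d1/2) * (norm Q)\<^sup>2 + (d2/2) * (norm W)\<^sup>2 + (l2/2) * (norm Om)\<^sup>2"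

definition Lag :: "real^'n^'m \<Rightarrow> real^'n^'s \<Rightarrow> real^'n^'c \<Rightarrow> real \<Rightarrow> real \<Rightarrow> real \<Rightarrow> real \<Rightarrow>
    real \<Rightarrow> real \<Rightarrow> real \<Rightarrow>
    real^'m^'r \<Rightarrow> real^'n^'r \<Rightarrow> real^'r^'s \<Rightarrow> real^'s^'c \<Rightarrow>
    real^'n^'s \<Rightarrow> real^'n^'c \<Rightarrow> real^'n^'s \<Rightarrow> real^'n^'c \<Rightarrow> real" where
  "Lag X H Y l1 l2 r1 r2 d1 d2 mu Om U Q W e1 e2 Z1 Z2 =
     Ls X H Y l2 r1 r2 d1 d2 mu Om U Q W e1 e2 Z1 Z2 + l1 * l1norm U"

type_synonym ('m,'n,'r,'s,'c) theta =
  "(real^'m^'r) \<times> (real^'n^'r) \<times> (real^'r^'s) \<times> (real^'s^'c) \<times>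
   (real^'n^'s) \<times> (real^'n^'c) \<times> (real^'n^'s) \<times> (real^'n^'c)"

definition Ls_th :: "real^'n^'m \<Rightarrow> real^'n^'s \<Rightarrow> real^'n^'c \<Rightarrow> real \<Rightarrow> real \<Rightarrow> real \<Rightarrow>
    real \<Rightarrow> real \<Rightarrow> real \<Rightarrow> ('m::finite,'n::finite,'r::finite,'s::finite,'c::finite) theta \<Rightarrow> real" where
  "Ls_th X H Y l2 r1 r2 d1 d2 mu Th =
     (case Th of (Om, U, Q, W, e1, e2, Z1, Z2) \<Rightarrow>
        Ls X H Y l2 r1 r2 d1 d2 mu Om U Q W e1 e2 Z1 Z2)"

definition thnorm :: "('m::finite,'n::finite,'r::finite,'s::finite,'c::finite) theta \<Rightarrow> real" where
  "thnorm Th = (case Th of (Om, U, Q, W, e1, e2, Z1, Z2) \<Rightarrow>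
     max (norm Om) (max (norm U) (max (norm Q) (max (norm W)
       (max (norm e1) (max (norm e2) (max (norm Z1) (norm Z2))))))))"

definition thdist :: "('m::finite,'n::finite,'r::finite,'s::finite,'c::finite) theta \<Rightarrow> ('m::finite,'n::finite,'r::finite,'s::finite,'c::finite) theta set \<Rightarrow> real" where
  "thdist Th S = (INF Th'\<in>S. thnorm (Th' - Th))"

definition Sset :: "real^'n^'m \<Rightarrow> real^'n^'s \<Rightarrow> real^'n^'c \<Rightarrow> real \<Rightarrow> real \<Rightarrow> real \<Rightarrow> real \<Rightarrow>
    real \<Rightarrow> real \<Rightarrow> real \<Rightarrow> real \<Rightarrow> ('m::finite,'n::finite,'r::finite,'s::finite,'c::finite) theta set" where
  "Sset X H Y l1 l2 r1 r2 d1 d2 mu R =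
     {Th. thnorm Th < R
        \<and> - grad (Ls_th X H Y l2 r1 r2 d1 d2 mu) Th
            \<in> (\<lambda>g. l1 *\<^sub>R g) ` subdiff (\<lambda>T. l1norm (fst (snd T))) Th
        \<and> (case Th of (Om, U, Q, W, e1, e2, Z1, Z2) \<Rightarrow>
             H = Q ** U + e1 \<and> Y = W ** Q ** U + e2)}"

end

theory Submission
  imports Defs
begin

text \<open>The augmented Lagrangian L is a Lyapunov function of the iteration. Each primal block update
  decreases L by a multiple of its squared step: the U-update is a proximal gradient step and the
  Q- and W-updates are gradient steps whose step sizes exceed the block Lipschitz constants on a
  sublevel set of L + (|Z1|^2 + |Z2|^2)/(2 mu), while the Omega- and epsilon-updates minimise
  strongly convex quadratics exactly. After every dual update the optimality condition of the
  epsilon_i-update reads Z_i = rho_i epsilon_i, so the increase |Delta Z_i|^2/mu caused by the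
  dual update is rho_i^2/mu |Delta epsilon_i|^2 and is absorbed by the decrease in epsilon_i as
  soon as mu > rho_i (the hypothesis mu >= sqrt 2 max rho_i is only used in this form). The same
  identity makes L + (|Z1|^2 + |Z2|^2)/(2 mu) coercive, so the iterates stay in a fixed ball and
  their successive differences tend to zero; passing to the limit in the update rules along a
  convergent subsequence shows that every limit point is stationary, and compactness then gives
  dist(Theta_k, S) \<rightarrow> 0.\<close>

section \<open>Matrix algebra and squared norms\<close>

lemma matrix_mult_add_rdistrib: "((A::real^'n^'m) + B) ** (C::real^'p^'n) = A ** C + B ** C"
  by (simp add: matrix_matrix_mult_def vec_eq_iff sum.distrib algebra_simps)

lemma matrix_mult_diff_rdistrib: "((A::real^'n^'m) - B) ** (C::real^'p^'n) = A ** C - B ** C"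
  by (simp add: matrix_matrix_mult_def vec_eq_iff sum_subtractf algebra_simps)

lemma matrix_mult_diff_ldistrib: "(A::real^'n^'m) ** ((B::real^'p^'n) - C) = A ** B - A ** C"
  by (simp add: matrix_matrix_mult_def vec_eq_iff sum_subtractf algebra_simps)

lemma matrix_mult_scaleR_right: "(A::real^'n^'m) ** (c *\<^sub>R (B::real^'p^'n)) = c *\<^sub>R (A ** B)"
  by (simp add: matrix_matrix_mult_def vec_eq_iff sum_distrib_left algebra_simps)

lemma matrix_mult_scaleR_left: "(c *\<^sub>R (A::real^'n^'m)) ** (B::real^'p^'n) = c *\<^sub>R (A ** B)"
  by (simp add: matrix_matrix_mult_def vec_eq_iff sum_distrib_left algebra_simps)

lemma matrix_mult_minus_right: "(A::real^'n^'m) ** (- (B::real^'p^'n)) = - (A ** B)"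
  by (simp add: matrix_matrix_mult_def vec_eq_iff sum_negf)

lemma matrix_mult_minus_left: "(- (A::real^'n^'m)) ** (B::real^'p^'n) = - (A ** B)"
  by (simp add: matrix_matrix_mult_def vec_eq_iff sum_negf)

lemmas matrix_mult_distribs = matrix_mult_add_rdistrib matrix_add_ldistrib
  matrix_mult_diff_rdistrib matrix_mult_diff_ldistrib matrix_mult_scaleR_left
  matrix_mult_scaleR_right matrix_mult_minus_left matrix_mult_minus_right

lemma inner_matrix_entries: "inner (A::real^'n^'m) B = (\<Sum>i\<in>UNIV. \<Sum>j\<in>UNIV. A$i$j * B$i$j)"
  by (simp add: inner_vec_def)

lemma inner_matrix_mult_expand:
  "inner ((A::real^'n^'m) ** (B::real^'p^'n)) C = (\<Sum>i\<in>UNIV. \<Sum>p\<in>UNIV. \<Sum>j\<in>UNIV. A$i$j * B$j$p * C$i$p)"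
  by (simp add: inner_matrix_entries matrix_matrix_mult_def sum_distrib_right)

lemma inner_matrix_mult_left: "inner ((A::real^'n^'m) ** (B::real^'p^'n)) C = inner B (transpose A ** C)"
proof -
  have "inner (A ** B) C = (\<Sum>p\<in>UNIV. \<Sum>i\<in>UNIV. \<Sum>j\<in>UNIV. A$i$j * B$j$p * C$i$p)"
    unfolding inner_matrix_mult_expand by (rule sum.swap)
  also have "\<dots> = (\<Sum>p\<in>UNIV. \<Sum>j\<in>UNIV. \<Sum>i\<in>UNIV. A$i$j * B$j$p * C$i$p)"
    by (rule sum.cong[OF refl], rule sum.swap)
  also have "\<dots> = (\<Sum>j\<in>UNIV. \<Sum>p\<in>UNIV. \<Sum>i\<in>UNIV. A$i$j * B$j$p * C$i$p)"
    by (rule sum.swap)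
  also have "\<dots> = inner B (transpose A ** C)"
    by (simp add: inner_matrix_entries matrix_matrix_mult_def transpose_def sum_distrib_left algebra_simps)
  finally show ?thesis .
qed

lemma inner_matrix_mult_right: "inner ((A::real^'n^'m) ** (B::real^'p^'n)) C = inner A (C ** transpose B)"
proof -
  have "inner (A ** B) C = (\<Sum>i\<in>UNIV. \<Sum>j\<in>UNIV. \<Sum>p\<in>UNIV. A$i$j * B$j$p * C$i$p)"
    unfolding inner_matrix_mult_expand by (rule sum.cong[OF refl], rule sum.swap)
  also have "\<dots> = inner A (C ** transpose B)"
    by (simp add: inner_matrix_entries matrix_matrix_mult_def transpose_def sum_distrib_left algebra_simps)
  finally show ?thesis .
qed

lemma inner_transpose_matrix_mult:
  "inner (transpose (A::real^'n^'m) ** (C::real^'p^'m)) (B::real^'p^'n) = inner C (A ** B)"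
  by (metis inner_matrix_mult_left inner_commute)

lemma inner_matrix_mult_transpose:
  "inner ((C::real^'n^'m) ** transpose (B::real^'n^'p)) (A::real^'p^'m) = inner C (A ** B)"
  by (metis inner_matrix_mult_right inner_commute)

lemma power2_norm_matrix: "(norm (A::real^'n^'m))\<^sup>2 = (\<Sum>i\<in>UNIV. \<Sum>j\<in>UNIV. (A$i$j)\<^sup>2)"
  unfolding power2_norm_eq_inner inner_matrix_entries by (simp add: power2_eq_square)

lemma power2_norm_matrix_mult_le:
  "(norm ((A::real^'n^'m) ** (B::real^'p^'n)))\<^sup>2 \<le> (norm A)\<^sup>2 * (norm B)\<^sup>2"
proof -
  have "(norm (A ** B))\<^sup>2 = (\<Sum>i\<in>UNIV. \<Sum>j\<in>UNIV. (inner (A$i) (column j B))\<^sup>2)"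
    by (simp add: power2_norm_matrix matrix_matrix_mult_def inner_vec_def column_def)
  also have "\<dots> \<le> (\<Sum>i\<in>UNIV. \<Sum>j\<in>UNIV. inner (A$i) (A$i) * inner (column j B) (column j B))"
    by (intro sum_mono Cauchy_Schwarz_ineq)
  also have "\<dots> = (\<Sum>i\<in>UNIV. inner (A$i) (A$i)) * (\<Sum>j\<in>UNIV. inner (column j B) (column j B))"
    by (simp add: sum_product)
  also have "(\<Sum>i\<in>UNIV. inner (A$i) (A$i)) = (norm A)\<^sup>2"
    by (simp add: power2_norm_eq_inner inner_vec_def)
  also have "(\<Sum>j\<in>UNIV. inner (column j B) (column j B)) = (\<Sum>j\<in>UNIV. \<Sum>k\<in>UNIV. (B$k$j)\<^sup>2)"
    by (simp add: inner_vec_def column_def power2_eq_square)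
  also have "\<dots> = (norm B)\<^sup>2"
    by (subst sum.swap) (simp add: power2_norm_matrix)
  finally show ?thesis .
qed

lemma norm_matrix_mult_le: "norm ((A::real^'n^'m) ** (B::real^'p^'n)) \<le> norm A * norm B"
  using power2_norm_matrix_mult_le[of A B]
  by (metis norm_ge_zero power_mult_distrib power2_le_imp_le zero_le_mult_iff)

lemma power2_norm_matrix_mult3_le:
  "(norm ((A::real^'n^'m) ** (B::real^'p^'n) ** (C::real^'q^'p)))\<^sup>2 \<le> (norm A)\<^sup>2 * (norm B)\<^sup>2 * (norm C)\<^sup>2"
  using power2_norm_matrix_mult_le[of "A ** B" C] power2_norm_matrix_mult_le[of A B]
  by (meson mult_right_mono order_trans zero_le_power2)

lemma bounded_bilinear_matrix_mult:
  "bounded_bilinear ((**) :: real^'n^'m \<Rightarrow> real^'p^'n \<Rightarrow> real^'p^'m)"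
  by unfold_locales
    (simp_all add: matrix_mult_distribs, rule exI[of _ 1], simp add: norm_matrix_mult_le)

lemmas has_derivative_matrix_mult [derivative_intros] =
  bounded_bilinear.FDERIV [OF bounded_bilinear_matrix_mult]
lemmas tendsto_matrix_mult [tendsto_intros] =
  bounded_bilinear.tendsto [OF bounded_bilinear_matrix_mult]

lemma tendsto_transpose [tendsto_intros]:
  fixes f :: "'a \<Rightarrow> real^'n^'m"
  assumes "(f \<longlongrightarrow> A) F"
  shows "((\<lambda>x. transpose (f x)) \<longlongrightarrow> transpose A) F"
  using assms by (intro vec_tendstoI) (simp add: transpose_def tendsto_vec_nth)

lemma tendsto_l1norm [tendsto_intros]:
  fixes f :: "'a \<Rightarrow> real^'n^'m"
  assumes "(f \<longlongrightarrow> A) F"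
  shows "((\<lambda>x. l1norm (f x)) \<longlongrightarrow> l1norm A) F"
  unfolding l1norm_def using assms by (intro tendsto_intros)

lemma power2_norm_add: "(norm ((a::'a::real_inner) + b))\<^sup>2 = (norm a)\<^sup>2 + 2 * inner a b + (norm b)\<^sup>2"
  by (simp add: power2_norm_eq_inner inner_add_left inner_add_right inner_commute)

lemma power2_norm_diff: "(norm ((a::'a::real_inner) - b))\<^sup>2 = (norm a)\<^sup>2 - 2 * inner a b + (norm b)\<^sup>2"
  by (simp add: power2_norm_eq_inner inner_diff_left inner_diff_right inner_commute)

lemma power2_norm_diff_le: "(norm ((a::'a::real_inner) - b))\<^sup>2 \<le> 2 * (norm a)\<^sup>2 + 2 * (norm b)\<^sup>2"
  using zero_le_power2[of "norm (a + b)"] by (simp add: power2_norm_add power2_norm_diff)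

lemma tendsto_Pair_iff:
  "((\<lambda>x. (f x, g x)) \<longlongrightarrow> (a, b)) F \<longleftrightarrow> (f \<longlongrightarrow> a) F \<and> (g \<longlongrightarrow> b) F"
  using tendsto_fst[of "\<lambda>x. (f x, g x)" "(a, b)" F] tendsto_snd[of "\<lambda>x. (f x, g x)" "(a, b)" F]
  by (auto intro: tendsto_Pair)

lemma power2_norm_Pair: "(norm (a, b))\<^sup>2 = (norm a)\<^sup>2 + (norm b)\<^sup>2"
  by (simp add: norm_Pair)

lemma inner_plus_square_lower_bound:
  fixes Z R :: "'a::real_inner"
  assumes "mu > 0"
  shows "- ((norm Z)\<^sup>2 / (2 * mu)) \<le> inner Z R + (mu/2) * (norm R)\<^sup>2"
proof -
  have "0 \<le> (norm (Z + mu *\<^sub>R R))\<^sup>2 / (2 * mu)" using assms by simp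
  also have "\<dots> = (norm Z)\<^sup>2 / (2 * mu) + (inner Z R + (mu/2) * (norm R)\<^sup>2)"
    unfolding power2_norm_add using assms by (simp add: power_mult_distrib field_simps power2_eq_square)
  finally show ?thesis by simp
qed

section \<open>Gradients from quadratic expansions\<close>

lemma grad_eqI:
  assumes "GDERIV f x :> D"
  shows "grad f x = D"
  unfolding grad_def
proof (rule the_equality)
  fix D' assume D': "GDERIV f x :> D'"
  have "(\<lambda>h. inner h D) = (\<lambda>h. inner h D')"
    using has_derivative_unique[OF assms[unfolded gderiv_def] D'[unfolded gderiv_def]] .
  then have "inner (D - D') D = inner (D - D') D'" by meson
  then have "inner (D - D') (D - D') = 0" by (simp add: inner_diff_right)
  then show "D' = D" by simp
qed (fact assms)

lemma gderiv_of_quadratic_expansion: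
  fixes f :: "'a::real_inner \<Rightarrow> real"
  assumes expand: "\<And>h. f (x + h) = f x + inner G h + q h"
    and small: "\<And>h. \<bar>q h\<bar> \<le> C * (norm h)\<^sup>2"
  shows "GDERIV f x :> G"
  unfolding gderiv_def has_derivative_iff_norm
proof
  show "bounded_linear (\<lambda>h. inner h G)" by (rule bounded_linear_inner_left)
  have le: "norm (norm (f y - f x - inner (y - x) G) / norm (y - x)) \<le> C * norm (y - x)" for y
  proof (cases "y = x")
    case False
    have "f y - f x - inner (y - x) G = q (y - x)"
      using expand[of "y - x"] by (simp add: inner_commute)
    then show ?thesis
      using small[of "y - x"] False by (simp add: divide_le_eq power2_eq_square mult.assoc)
  qed simp
  have "((\<lambda>y. C * norm (y - x)) \<longlongrightarrow> C * norm (x - x)) (at x)"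
    by (intro tendsto_intros)
  then have lim: "((\<lambda>y. C * norm (y - x)) \<longlongrightarrow> 0) (at x)" by simp
  show "((\<lambda>y. norm (f y - f x - inner (y - x) G) / norm (y - x)) \<longlongrightarrow> 0) (at x)"
    by (rule Lim_null_comparison[OF always_eventually lim]) (use le in auto)
qed

lemma gradient_step_descent:
  fixes f :: "'a::real_inner \<Rightarrow> real"
  assumes expand: "\<And>h. f (x + h) = f x + inner G h + q h"
    and bound: "\<And>h. q h \<le> C * (norm h)\<^sup>2"
    and c: "c > 0" and x': "x' = x - (1/c) *\<^sub>R G"
  shows "f x' \<le> f x - (c - C) * (norm (x' - x))\<^sup>2"
proof -
  have "x' - x = - (1/c) *\<^sub>R G" using x' by simp
  then have "inner G (x' - x) = - c * (norm (x' - x))\<^sup>2"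
    using c by (simp add: dot_square_norm power2_eq_square)
  then show ?thesis
    using expand[of "x' - x"] bound[of "x' - x"] by (simp add: algebra_simps)
qed

lemma minimiser_of_quadratic_expansion:
  fixes f :: "'a::real_inner \<Rightarrow> real"
  assumes expand: "\<And>h. f (x + h) = f x + inner G h + q h"
    and hom: "\<And>t h. q (t *\<^sub>R h) = t\<^sup>2 * q h"
    and min: "\<And>y. f x \<le> f y"
  shows "G = 0" and "f y = f x + q (y - x)"
proof -
  have le: "t * inner G G \<le> t\<^sup>2 * q G" for t
    using min[of "x + (- t) *\<^sub>R G"] expand[of "(- t) *\<^sub>R G"] hom[of "- t" G] by simp
  have "\<not> inner G G > 0"
  proof
    assume p: "inner G G > 0"
    show False
    proof (cases "q G \<le> 0")
      case True
      then show False using le[of 1] p by simp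
    next
      case False
      define t where "t = inner G G / (2 * q G)"
      have "t\<^sup>2 * q G = t * inner G G / 2" using False by (simp add: t_def power2_eq_square)
      moreover have "t * inner G G > 0" using False p by (simp add: t_def)
      ultimately show False using le[of t] by linarith
    qed
  qed
  then show G: "G = 0" by (metis inner_gt_zero_iff)
  show "f y = f x + q (y - x)" using expand[of "y - x"] G by simp
qed

section \<open>Soft thresholding and the l1 norm\<close>

lemma soft_threshold_scalar:
  fixes t v u :: real
  assumes "t \<ge> 0"
  defines "s \<equiv> sgn v * max (\<bar>v\<bar> - t) 0"
  shows "t * \<bar>s\<bar> + (v - s) * (u - s) \<le> t * \<bar>u\<bar>"
proof -
  consider "v > t" | "v < - t" | "\<bar>v\<bar> \<le> t" by linarith
  then show ?thesis
  proof cases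
    case 1
    then have s: "s = v - t" and abs_s: "\<bar>v - t\<bar> = v - t" using assms(1) by (simp_all add: s_def sgn_if)
    have "t * u \<le> t * \<bar>u\<bar>" using assms(1) by (simp add: mult_left_mono)
    then show ?thesis unfolding s abs_s by (simp add: algebra_simps)
  next
    case 2
    then have s: "s = v + t" and abs_s: "\<bar>v + t\<bar> = - v - t" using assms(1) by (simp_all add: s_def sgn_if)
    have "- (t * u) \<le> t * \<bar>u\<bar>"
      using assms(1) by (metis abs_ge_minus_self mult_left_mono mult_minus_right)
    then show ?thesis unfolding s abs_s by (simp add: algebra_simps)
  next
    case 3
    have "v * u \<le> \<bar>v\<bar> * \<bar>u\<bar>" by (metis abs_ge_self abs_mult)
    also have "\<dots> \<le> t * \<bar>u\<bar>" using 3 by (simp add: mult_right_mono)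
    finally show ?thesis using 3 by (simp add: s_def)
  qed
qed

text \<open>Soft thresholding is the proximal map of t times the l1 norm, in variational form.\<close>
lemma soft_prox:
  fixes V U :: "real^'n^'m"
  assumes "t \<ge> 0"
  shows "t * l1norm (soft t V) + inner (V - soft t V) (U - soft t V) \<le> t * l1norm U"
proof -
  have "t * l1norm (soft t V) + inner (V - soft t V) (U - soft t V)
     = (\<Sum>i\<in>UNIV. \<Sum>j\<in>UNIV. t * \<bar>sgn (V$i$j) * max (\<bar>V$i$j\<bar> - t) 0\<bar>
         + (V$i$j - sgn (V$i$j) * max (\<bar>V$i$j\<bar> - t) 0) * (U$i$j - sgn (V$i$j) * max (\<bar>V$i$j\<bar> - t) 0))"
    by (simp add: l1norm_def inner_matrix_entries soft_def sum_distrib_left sum.distrib)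
  also have "\<dots> \<le> (\<Sum>i\<in>UNIV. \<Sum>j\<in>UNIV. t * \<bar>U$i$j\<bar>)"
    by (intro sum_mono soft_threshold_scalar assms)
  also have "\<dots> = t * l1norm U" by (simp add: l1norm_def sum_distrib_left)
  finally show ?thesis .
qed

lemma prox_gradient_step:
  fixes U V G :: "real^'n^'m"
  assumes c: "c > 0" and "l \<ge> 0" and U': "U' = soft (l / c) (U - (1 / c) *\<^sub>R G)"
  shows "l * l1norm U' + inner (- G - c *\<^sub>R (U' - U)) (V - U') \<le> l * l1norm V"
proof -
  define D where "D = (U - (1 / c) *\<^sub>R G) - U'"
  have "(l/c) * l1norm U' + inner D (V - U') \<le> (l/c) * l1norm V"
    using soft_prox[of "l/c" "U - (1 / c) *\<^sub>R G" V] assms by (simp add: U' D_def)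
  then have "c * ((l/c) * l1norm U' + inner D (V - U')) \<le> c * ((l/c) * l1norm V)"
    by (rule mult_left_mono) (use c in simp)
  moreover have "c *\<^sub>R D = - G - c *\<^sub>R (U' - U)"
    using c by (simp add: D_def algebra_simps)
  ultimately show ?thesis
    using c by (simp add: distrib_left flip: \<open>c *\<^sub>R D = - G - c *\<^sub>R (U' - U)\<close>)
qed

lemma l1norm_nonneg: "l1norm A \<ge> 0"
  unfolding l1norm_def by (intro sum_nonneg) auto

lemma sum_squares_le_square_sum:
  fixes f :: "'a \<Rightarrow> real"
  assumes "finite S" "\<And>x. x \<in> S \<Longrightarrow> f x \<ge> 0"
  shows "(\<Sum>x\<in>S. (f x)\<^sup>2) \<le> (\<Sum>x\<in>S. f x)\<^sup>2"
  using assms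
proof (induction S rule: finite_induct)
  case empty
  show ?case by simp
next
  case (insert a S)
  have IH: "(\<Sum>x\<in>S. (f x)\<^sup>2) \<le> (sum f S)\<^sup>2" using insert.IH insert.prems by blast
  have "0 \<le> f a * sum f S" using insert.prems by (simp add: sum_nonneg)
  then have "(f a)\<^sup>2 + (sum f S)\<^sup>2 \<le> (f a + sum f S)\<^sup>2" by (simp only: power2_sum)
  then show ?case using IH by (simp only: sum.insert[OF insert.hyps])
qed

lemma norm_le_l1norm: "norm A \<le> l1norm A"
proof -
  have "(norm A)\<^sup>2 = (\<Sum>i\<in>UNIV. \<Sum>j\<in>UNIV. (\<bar>A$i$j\<bar>)\<^sup>2)" by (simp add: power2_norm_matrix)
  also have "\<dots> \<le> (\<Sum>i\<in>UNIV. (\<Sum>j\<in>UNIV. \<bar>A$i$j\<bar>)\<^sup>2)"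
    by (intro sum_mono sum_squares_le_square_sum) auto
  also have "\<dots> \<le> (l1norm A)\<^sup>2"
    unfolding l1norm_def by (rule sum_squares_le_square_sum) (simp_all add: sum_nonneg)
  finally show ?thesis using l1norm_nonneg by (rule power2_le_imp_le)
qed

section \<open>Sequences\<close>

lemma steps_tendsto_zero_of_descent:
  fixes f :: "nat \<Rightarrow> 'a::real_normed_vector" and L :: "nat \<Rightarrow> real"
  assumes descent: "\<And>k. c * (norm (f (Suc k) - f k))\<^sup>2 \<le> L k - L (Suc k)"
    and c: "c > 0" and nonneg: "\<And>k. 0 \<le> L k"
  shows "(\<lambda>k. f (Suc k) - f k) \<longlonglongrightarrow> 0"
proof -
  have "decseq L"
  proof (rule decseq_SucI)
    fix k
    have "0 \<le> c * (norm (f (Suc k) - f k))\<^sup>2" using c by simp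
    then show "L (Suc k) \<le> L k" using descent[of k] by linarith
  qed
  then obtain l where lim: "L \<longlonglongrightarrow> l"
    using decseq_convergent[of L 0] nonneg by blast
  have "(\<lambda>k. L k - L (Suc k)) \<longlonglongrightarrow> 0"
    using tendsto_diff[OF lim LIMSEQ_Suc[OF lim]] by simp
  then have gap: "(\<lambda>k. (L k - L (Suc k)) / c) \<longlonglongrightarrow> 0" by (rule tendsto_divide_zero)
  have "(\<lambda>k. (norm (f (Suc k) - f k))\<^sup>2) \<longlonglongrightarrow> 0"
  proof (rule real_tendsto_sandwich[OF _ _ tendsto_const gap])
    show "\<forall>\<^sub>F k in sequentially. (norm (f (Suc k) - f k))\<^sup>2 \<le> (L k - L (Suc k)) / c"
      using descent c by (simp add: pos_le_divide_eq mult.commute)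
  qed simp
  then have "(\<lambda>k. sqrt ((norm (f (Suc k) - f k))\<^sup>2)) \<longlonglongrightarrow> sqrt 0"
    by (rule tendsto_real_sqrt)
  then show ?thesis by (simp add: tendsto_norm_zero_iff)
qed

lemma LIMSEQ_Suc_subseq:
  fixes f :: "nat \<Rightarrow> 'a::real_normed_vector"
  assumes "(f \<circ> phi) \<longlonglongrightarrow> a" "(\<lambda>k. f (Suc k) - f k) \<longlonglongrightarrow> 0" "strict_mono phi"
  shows "(\<lambda>j. f (Suc (phi j))) \<longlonglongrightarrow> a"
proof -
  have "((\<lambda>k. f (Suc k) - f k) \<circ> phi) \<longlonglongrightarrow> 0" by (rule LIMSEQ_subseq_LIMSEQ[OF assms(2,3)])
  then have "(\<lambda>j. f (phi j) + (f (Suc (phi j)) - f (phi j))) \<longlonglongrightarrow> a + 0"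
    using assms(1) by (intro tendsto_add) (simp_all add: o_def)
  then show ?thesis by simp
qed

lemma infdist_to_limit_points_tendsto_zero:
  fixes x :: "nat \<Rightarrow> 'a::heine_borel"
  assumes bdd: "bounded (range x)"
    and limits: "\<And>phi l. strict_mono phi \<Longrightarrow> (x \<circ> phi) \<longlonglongrightarrow> l \<Longrightarrow> l \<in> S"
  shows "(\<lambda>k. infdist (x k) S) \<longlonglongrightarrow> 0"
proof (rule ccontr)
  assume "\<not> ?thesis"
  then obtain eps where "eps > 0" and frequently: "\<forall>N. \<exists>n\<ge>N. eps \<le> infdist (x n) S"
    unfolding LIMSEQ_iff by (auto simp: not_less abs_of_nonneg[OF infdist_nonneg])
  define I where "I = {n. eps \<le> infdist (x n) S}"
  have "infinite I"
    unfolding infinite_nat_iff_unbounded_le I_def using frequently by simp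
  then obtain psi :: "nat \<Rightarrow> nat" where psi: "strict_mono psi" "\<forall>n. psi n \<in> I"
    using infinite_enumerate by blast
  have "bounded (range (x \<circ> psi))" by (rule bounded_subset[OF bdd]) auto
  then obtain l chi where chi: "strict_mono chi" "((x \<circ> psi) \<circ> chi) \<longlonglongrightarrow> l"
    using bounded_imp_convergent_subsequence by blast
  define phi where "phi = psi \<circ> chi"
  have "strict_mono phi" unfolding phi_def using psi(1) chi(1) by (rule strict_mono_o)
  moreover have lim: "(x \<circ> phi) \<longlonglongrightarrow> l" using chi(2) by (simp add: phi_def o_assoc)
  ultimately have "l \<in> S" by (rule limits)
  have "(\<lambda>n. dist ((x \<circ> phi) n) l) \<longlonglongrightarrow> dist l l" by (intro tendsto_dist lim tendsto_const)
  then obtain N where "\<forall>n\<ge>N. norm (dist ((x \<circ> phi) n) l - 0) < eps"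
    using LIMSEQ_D \<open>eps > 0\<close> by fastforce
  then have "dist (x (phi N)) l < eps" by simp
  moreover have "phi N \<in> I" using psi(2) by (simp add: phi_def)
  ultimately show False
    using infdist_le[OF \<open>l \<in> S\<close>, of "x (phi N)"] by (simp add: I_def)
qed

section \<open>The max-norm of a parameter tuple\<close>

lemma thnorm_tuple:
  "thnorm (a, b, c, d, e, f, g, h) = max (norm a) (max (norm b) (max (norm c) (max (norm d)
     (max (norm e) (max (norm f) (max (norm g) (norm h)))))))"
  unfolding thnorm_def by (simp only: prod.case)

lemma thnorm_projections:
  "thnorm T = max (norm (fst T)) (max (norm (fst (snd T))) (max (norm (fst (snd (snd T))))
     (max (norm (fst (snd (snd (snd T))))) (max (norm (fst (snd (snd (snd (snd T))))))
     (max (norm (fst (snd (snd (snd (snd (snd T)))))))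
     (max (norm (fst (snd (snd (snd (snd (snd (snd T))))))))
       (norm (snd (snd (snd (snd (snd (snd (snd T))))))))))))))"
  using thnorm_tuple[of "fst T" "fst (snd T)" "fst (snd (snd T))" "fst (snd (snd (snd T)))"
     "fst (snd (snd (snd (snd T))))" "fst (snd (snd (snd (snd (snd T)))))"
     "fst (snd (snd (snd (snd (snd (snd T))))))" "snd (snd (snd (snd (snd (snd (snd T))))))"]
  by (simp only: prod.collapse)

lemma norm_theta:
  "norm (a, b, c, d, e, f, g, h) = sqrt ((norm a)\<^sup>2 + (norm b)\<^sup>2 + (norm c)\<^sup>2 + (norm d)\<^sup>2
      + (norm e)\<^sup>2 + (norm f)\<^sup>2 + (norm g)\<^sup>2 + (norm h)\<^sup>2)"
  by (simp only: norm_Pair real_sqrt_pow2 add_nonneg_nonneg zero_le_power2 add.assoc)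

lemma thnorm_le_norm: "thnorm T \<le> norm T"
proof -
  obtain a b c d e f g h where T: "T = (a, b, c, d, e, f, g, h)" by (metis prod.collapse)
  have "norm a \<le> norm T" "norm b \<le> norm T" "norm c \<le> norm T" "norm d \<le> norm T"
    "norm e \<le> norm T" "norm f \<le> norm T" "norm g \<le> norm T" "norm h \<le> norm T"
    unfolding T norm_theta by (rule real_le_rsqrt, simp)+
  then show ?thesis unfolding T thnorm_tuple max.bounded_iff by blast
qed

lemma norm_le_thnorm: "norm T \<le> 3 * thnorm T"
proof -
  obtain a b c d e f g h where T: "T = (a, b, c, d, e, f, g, h)" by (metis prod.collapse)
  define t where "t = thnorm T"
  have "norm a \<le> t" "norm b \<le> t" "norm c \<le> t" "norm d \<le> t"
    "norm e \<le> t" "norm f \<le> t" "norm g \<le> t" "norm h \<le> t"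
    unfolding t_def T thnorm_tuple by (meson max.cobounded1 max.cobounded2 order_trans)+
  then have sq: "(norm a)\<^sup>2 \<le> t\<^sup>2" "(norm b)\<^sup>2 \<le> t\<^sup>2" "(norm c)\<^sup>2 \<le> t\<^sup>2" "(norm d)\<^sup>2 \<le> t\<^sup>2"
    "(norm e)\<^sup>2 \<le> t\<^sup>2" "(norm f)\<^sup>2 \<le> t\<^sup>2" "(norm g)\<^sup>2 \<le> t\<^sup>2" "(norm h)\<^sup>2 \<le> t\<^sup>2"
    and t_nonneg: "0 \<le> t"
    by (simp_all add: power_mono) (meson norm_ge_zero order_trans)
  have "(3 * t)\<^sup>2 = 9 * t\<^sup>2" by (simp add: power_mult_distrib)
  then have "(norm a)\<^sup>2 + (norm b)\<^sup>2 + (norm c)\<^sup>2 + (norm d)\<^sup>2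
      + (norm e)\<^sup>2 + (norm f)\<^sup>2 + (norm g)\<^sup>2 + (norm h)\<^sup>2 \<le> (3 * t)\<^sup>2"
    using sq zero_le_power2[of t] by linarith
  then have "norm T \<le> sqrt ((3 * t)\<^sup>2)"
    unfolding T norm_theta by (rule real_sqrt_le_mono)
  moreover have "sqrt ((3 * t)\<^sup>2) = 3 * t" using t_nonneg by (subst real_sqrt_abs) simp
  ultimately show ?thesis by (simp add: t_def)
qed

lemma tendsto_thnorm:
  fixes f :: "'a \<Rightarrow> ('m::finite,'n::finite,'r::finite,'s::finite,'c::finite) theta"
  assumes "(f \<longlongrightarrow> T) F"
  shows "((\<lambda>x. thnorm (f x)) \<longlongrightarrow> thnorm T) F"
  unfolding thnorm_projections using assms by (intro tendsto_intros)

lemma thnorm_nonneg: "0 \<le> thnorm T"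
  unfolding thnorm_projections by (rule order_trans[OF norm_ge_zero max.cobounded1])

lemma thdist_nonneg: "S \<noteq> {} \<Longrightarrow> 0 \<le> thdist T S"
  unfolding thdist_def by (rule cINF_greatest) (simp_all add: thnorm_nonneg)

lemma thdist_le_infdist:
  assumes "S \<noteq> {}"
  shows "thdist T S \<le> infdist T S"
proof -
  have "thdist T S \<le> dist T a" if "a \<in> S" for a
  proof -
    have "thdist T S \<le> thnorm (a - T)"
      unfolding thdist_def by (rule cINF_lower[OF bdd_belowI2[of _ 0]]) (simp_all add: thnorm_nonneg that)
    also have "\<dots> \<le> dist T a" by (simp add: dist_norm norm_minus_commute order_trans[OF thnorm_le_norm])
    finally show ?thesis .
  qed
  then show ?thesis using assms unfolding infdist_def by (simp add: cINF_greatest)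
qed

lemma norm_le_one_plus_of_power2_le:
  fixes x :: "'a::real_normed_vector"
  assumes "(norm x)\<^sup>2 \<le> a"
  shows "norm x \<le> 1 + a"
proof (cases "norm x \<le> 1")
  case True
  then show ?thesis using assms zero_le_power2[of "norm x"] by linarith
next
  case False
  then have "1 * norm x \<le> norm x * norm x" by (intro mult_right_mono) auto
  then have "norm x \<le> (norm x)\<^sup>2" by (simp add: power2_eq_square)
  then show ?thesis using assms by linarith
qed

section \<open>The augmented Lagrangian\<close>

locale adm_problem =
  fixes X :: "real^'n^'m" and H :: "real^'n^'s" and Y :: "real^'n^'c"
    and l1 l2 r1 r2 d1 d2 mu :: real
  assumes pos: "l1 > 0" "l2 > 0" "r1 > 0" "r2 > 0" "d1 > 0" "d2 > 0" "mu > 0"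
begin

abbreviation lsm ("\<L>\<^sub>s") where "\<L>\<^sub>s \<equiv> Ls X H Y l2 r1 r2 d1 d2 mu"
abbreviation lag ("\<L>") where "\<L> \<equiv> Lag X H Y l1 l2 r1 r2 d1 d2 mu"

definition gradOm :: "real^'m^'r \<Rightarrow> real^'n^'r \<Rightarrow> real^'m^'r" where
  "gradOm Om U = l2 *\<^sub>R Om - (U - Om ** X) ** transpose X"

definition gradU :: "real^'m^'r \<Rightarrow> real^'n^'r \<Rightarrow> real^'r^'s \<Rightarrow> real^'s^'c \<Rightarrow>
    real^'n^'s \<Rightarrow> real^'n^'c \<Rightarrow> real^'n^'s \<Rightarrow> real^'n^'c \<Rightarrow> real^'n^'r" where
  "gradU Om U Q W e1 e2 Z1 Z2 = (U - Om ** X) - transpose Q ** (Z1 + mu *\<^sub>R (H - Q ** U - e1))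
     - transpose (W ** Q) ** (Z2 + mu *\<^sub>R (Y - W ** Q ** U - e2))"

definition gradQ :: "real^'n^'r \<Rightarrow> real^'r^'s \<Rightarrow> real^'s^'c \<Rightarrow>
    real^'n^'s \<Rightarrow> real^'n^'c \<Rightarrow> real^'n^'s \<Rightarrow> real^'n^'c \<Rightarrow> real^'r^'s" where
  "gradQ U Q W e1 e2 Z1 Z2 = d1 *\<^sub>R Q - (Z1 + mu *\<^sub>R (H - Q ** U - e1)) ** transpose U
     - transpose W ** (Z2 + mu *\<^sub>R (Y - W ** Q ** U - e2)) ** transpose U"

definition gradW :: "real^'n^'r \<Rightarrow> real^'r^'s \<Rightarrow> real^'s^'c \<Rightarrow>
    real^'n^'c \<Rightarrow> real^'n^'c \<Rightarrow> real^'s^'c" where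
  "gradW U Q W e2 Z2 = d2 *\<^sub>R W - (Z2 + mu *\<^sub>R (Y - W ** Q ** U - e2)) ** transpose (Q ** U)"

definition grade1 :: "real^'n^'r \<Rightarrow> real^'r^'s \<Rightarrow> real^'n^'s \<Rightarrow> real^'n^'s \<Rightarrow> real^'n^'s" where
  "grade1 U Q e1 Z1 = r1 *\<^sub>R e1 - Z1 - mu *\<^sub>R (H - Q ** U - e1)"

definition grade2 :: "real^'n^'r \<Rightarrow> real^'r^'s \<Rightarrow> real^'s^'c \<Rightarrow> real^'n^'c \<Rightarrow> real^'n^'c \<Rightarrow> real^'n^'c" where
  "grade2 U Q W e2 Z2 = r2 *\<^sub>R e2 - Z2 - mu *\<^sub>R (Y - W ** Q ** U - e2)"

lemma inner_gradU:
  "inner (gradU Om U Q W e1 e2 Z1 Z2) h = inner (U - Om ** X) h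
     - inner (Z1 + mu *\<^sub>R (H - Q ** U - e1)) (Q ** h)
     - inner (Z2 + mu *\<^sub>R (Y - W ** Q ** U - e2)) (W ** Q ** h)"
  unfolding gradU_def inner_diff_left inner_transpose_matrix_mult by (simp add: matrix_mul_assoc)

lemma inner_gradQ:
  "inner (gradQ U Q W e1 e2 Z1 Z2) h = d1 * inner Q h
     - inner (Z1 + mu *\<^sub>R (H - Q ** U - e1)) (h ** U)
     - inner (Z2 + mu *\<^sub>R (Y - W ** Q ** U - e2)) (W ** h ** U)"
  unfolding gradQ_def inner_diff_left inner_matrix_mult_transpose inner_transpose_matrix_mult
  by (simp add: matrix_mul_assoc)

lemma inner_gradW:
  "inner (gradW U Q W e2 Z2) h = d2 * inner W h
     - inner (Z2 + mu *\<^sub>R (Y - W ** Q ** U - e2)) (h ** Q ** U)"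
  unfolding gradW_def inner_diff_left inner_matrix_mult_transpose by (simp add: matrix_mul_assoc)

lemma inner_gradOm:
  "inner (gradOm Om U) h = l2 * inner Om h - inner (U - Om ** X) (h ** X)"
  unfolding gradOm_def inner_diff_left inner_matrix_mult_transpose by simp

lemma lsm_expand_U:
  "\<L>\<^sub>s Om (U + h) Q W e1 e2 Z1 Z2 = \<L>\<^sub>s Om U Q W e1 e2 Z1 Z2 + inner (gradU Om U Q W e1 e2 Z1 Z2) h
     + ((1/2) * (norm h)\<^sup>2 + (mu/2) * (norm (Q ** h))\<^sup>2 + (mu/2) * (norm (W ** Q ** h))\<^sup>2)"
proof -
  have a: "U + h - Om ** X = (U - Om ** X) + h"
    "H - Q ** (U + h) - e1 = (H - Q ** U - e1) - Q ** h"
    "Y - W ** Q ** (U + h) - e2 = (Y - W ** Q ** U - e2) - W ** Q ** h"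
    by (simp_all add: matrix_mult_distribs)
  show ?thesis
    unfolding Ls_def a(1-3) inner_gradU power2_norm_add power2_norm_diff
    by (simp add: inner_commute algebra_simps)
qed

lemma lsm_expand_Q:
  "\<L>\<^sub>s Om U (Q + h) W e1 e2 Z1 Z2 = \<L>\<^sub>s Om U Q W e1 e2 Z1 Z2 + inner (gradQ U Q W e1 e2 Z1 Z2) h
     + ((d1/2) * (norm h)\<^sup>2 + (mu/2) * (norm (h ** U))\<^sup>2 + (mu/2) * (norm (W ** h ** U))\<^sup>2)"
proof -
  have a: "H - (Q + h) ** U - e1 = (H - Q ** U - e1) - h ** U"
    "Y - W ** (Q + h) ** U - e2 = (Y - W ** Q ** U - e2) - W ** h ** U"
    by (simp_all add: matrix_mult_distribs)
  show ?thesis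
    unfolding Ls_def a(1,2) inner_gradQ power2_norm_add power2_norm_diff
    by (simp add: inner_commute algebra_simps)
qed

lemma lsm_expand_W:
  "\<L>\<^sub>s Om U Q (W + h) e1 e2 Z1 Z2 = \<L>\<^sub>s Om U Q W e1 e2 Z1 Z2 + inner (gradW U Q W e2 Z2) h
     + ((d2/2) * (norm h)\<^sup>2 + (mu/2) * (norm (h ** Q ** U))\<^sup>2)"
proof -
  have a: "Y - (W + h) ** Q ** U - e2 = (Y - W ** Q ** U - e2) - h ** Q ** U"
    by (simp add: matrix_mult_distribs)
  show ?thesis
    unfolding Ls_def a inner_gradW power2_norm_add power2_norm_diff
    by (simp add: inner_commute algebra_simps)
qed

lemma lsm_expand_Om:
  "\<L>\<^sub>s (Om + h) U Q W e1 e2 Z1 Z2 = \<L>\<^sub>s Om U Q W e1 e2 Z1 Z2 + inner (gradOm Om U) h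
     + ((1/2) * (norm (h ** X))\<^sup>2 + (l2/2) * (norm h)\<^sup>2)"
proof -
  have a: "U - (Om + h) ** X = (U - Om ** X) - h ** X" by (simp add: matrix_mult_distribs)
  show ?thesis
    unfolding Ls_def a inner_gradOm power2_norm_add power2_norm_diff
    by (simp add: inner_commute algebra_simps)
qed

lemma lsm_expand_e1:
  "\<L>\<^sub>s Om U Q W (e1 + h) e2 Z1 Z2 = \<L>\<^sub>s Om U Q W e1 e2 Z1 Z2 + inner (grade1 U Q e1 Z1) h
     + ((r1 + mu)/2) * (norm h)\<^sup>2"
proof -
  have a: "H - Q ** U - (e1 + h) = (H - Q ** U - e1) - h" by simp
  show ?thesis
    unfolding Ls_def a grade1_def power2_norm_add power2_norm_diff
    by (simp add: inner_commute algebra_simps)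
qed

lemma lsm_expand_e2:
  "\<L>\<^sub>s Om U Q W e1 (e2 + h) Z1 Z2 = \<L>\<^sub>s Om U Q W e1 e2 Z1 Z2 + inner (grade2 U Q W e2 Z2) h
     + ((r2 + mu)/2) * (norm h)\<^sup>2"
proof -
  have a: "Y - W ** Q ** U - (e2 + h) = (Y - W ** Q ** U - e2) - h" by simp
  show ?thesis
    unfolding Ls_def a grade2_def power2_norm_add power2_norm_diff
    by (simp add: inner_commute algebra_simps)
qed

definition lipU :: "real \<Rightarrow> real \<Rightarrow> real" where
  "lipU q w = (1 + mu * q + mu * w * q) / 2"

definition lipQ :: "real \<Rightarrow> real \<Rightarrow> real" where
  "lipQ u w = (d1 + mu * u + mu * w * u) / 2"

definition lipW :: "real \<Rightarrow> real \<Rightarrow> real" where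
  "lipW q u = (d2 + mu * q * u) / 2"

lemma remainder_U_le:
  fixes h :: "real^'n^'r" and Q :: "real^'r^'s" and W :: "real^'s^'c"
  shows "(1/2) * (norm h)\<^sup>2 + (mu/2) * (norm (Q ** h))\<^sup>2 + (mu/2) * (norm (W ** Q ** h))\<^sup>2
     \<le> lipU ((norm Q)\<^sup>2) ((norm W)\<^sup>2) * (norm h)\<^sup>2"
proof -
  have "(mu/2) * (norm (Q ** h))\<^sup>2 \<le> (mu/2) * ((norm Q)\<^sup>2 * (norm h)\<^sup>2)"
    by (rule mult_left_mono[OF power2_norm_matrix_mult_le]) (use pos in simp)
  moreover have "(mu/2) * (norm (W ** Q ** h))\<^sup>2 \<le> (mu/2) * ((norm W)\<^sup>2 * (norm Q)\<^sup>2 * (norm h)\<^sup>2)"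
    by (rule mult_left_mono[OF power2_norm_matrix_mult3_le]) (use pos in simp)
  ultimately show ?thesis by (simp add: lipU_def algebra_simps add_divide_distrib)
qed

lemma remainder_Q_le:
  fixes h :: "real^'r^'s" and U :: "real^'n^'r" and W :: "real^'s^'c"
  shows "(d1/2) * (norm h)\<^sup>2 + (mu/2) * (norm (h ** U))\<^sup>2 + (mu/2) * (norm (W ** h ** U))\<^sup>2
     \<le> lipQ ((norm U)\<^sup>2) ((norm W)\<^sup>2) * (norm h)\<^sup>2"
proof -
  have "(mu/2) * (norm (h ** U))\<^sup>2 \<le> (mu/2) * ((norm h)\<^sup>2 * (norm U)\<^sup>2)"
    by (rule mult_left_mono[OF power2_norm_matrix_mult_le]) (use pos in simp)
  moreover have "(mu/2) * (norm (W ** h ** U))\<^sup>2 \<le> (mu/2) * ((norm W)\<^sup>2 * (norm h)\<^sup>2 * (norm U)\<^sup>2)"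
    by (rule mult_left_mono[OF power2_norm_matrix_mult3_le]) (use pos in simp)
  ultimately show ?thesis by (simp add: lipQ_def algebra_simps add_divide_distrib)
qed

lemma remainder_W_le:
  fixes h :: "real^'s^'c" and Q :: "real^'r^'s" and U :: "real^'n^'r"
  shows "(d2/2) * (norm h)\<^sup>2 + (mu/2) * (norm (h ** Q ** U))\<^sup>2 \<le> lipW ((norm Q)\<^sup>2) ((norm U)\<^sup>2) * (norm h)\<^sup>2"
proof -
  have "(mu/2) * (norm (h ** Q ** U))\<^sup>2 \<le> (mu/2) * ((norm h)\<^sup>2 * (norm Q)\<^sup>2 * (norm U)\<^sup>2)"
    by (rule mult_left_mono[OF power2_norm_matrix_mult3_le]) (use pos in simp)
  then show ?thesis by (simp add: lipW_def algebra_simps add_divide_distrib)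
qed

lemma lip_nonneg:
  assumes "0 \<le> a" "0 \<le> b"
  shows "0 \<le> lipU a b" "0 \<le> lipQ a b" "0 \<le> lipW a b"
  using assms pos by (simp_all add: lipU_def lipQ_def lipW_def)

lemma lip_mono:
  assumes "0 \<le> a" "a \<le> a'" "0 \<le> b" "b \<le> b'"
  shows "lipU a b \<le> lipU a' b'" "lipQ a b \<le> lipQ a' b'" "lipW a b \<le> lipW a' b'"
proof -
  have "mu * a \<le> mu * a'" "mu * b * a \<le> mu * b' * a'" "mu * a * b \<le> mu * a' * b'"
    using assms pos(7) by (simp_all add: mult_mono mult_left_mono)
  then show "lipU a b \<le> lipU a' b'" "lipQ a b \<le> lipQ a' b'" "lipW a b \<le> lipW a' b'"
    by (simp_all add: lipU_def lipQ_def lipW_def)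
qed

lemma grad_lsm_U:
  fixes U :: "real^'n^'r" and Q :: "real^'r^'s" and W :: "real^'s^'c"
  shows "grad (\<lambda>V. \<L>\<^sub>s Om V Q W e1 e2 Z1 Z2) U = gradU Om U Q W e1 e2 Z1 Z2"
proof (rule grad_eqI, rule gderiv_of_quadratic_expansion[OF lsm_expand_U])
  show "\<bar>(1/2) * (norm h)\<^sup>2 + (mu/2) * (norm (Q ** h))\<^sup>2 + (mu/2) * (norm (W ** Q ** h))\<^sup>2\<bar>
     \<le> lipU ((norm Q)\<^sup>2) ((norm W)\<^sup>2) * (norm h)\<^sup>2" for h :: "real^'n^'r"
    using remainder_U_le pos(7) by simp
qed

lemma grad_lag_Q:
  fixes U :: "real^'n^'r" and Q :: "real^'r^'s" and W :: "real^'s^'c"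
  shows "grad (\<lambda>V. \<L> Om U V W e1 e2 Z1 Z2) Q = gradQ U Q W e1 e2 Z1 Z2"
proof (rule grad_eqI, rule gderiv_of_quadratic_expansion)
  show "\<L> Om U (Q + h) W e1 e2 Z1 Z2 = \<L> Om U Q W e1 e2 Z1 Z2 + inner (gradQ U Q W e1 e2 Z1 Z2) h
     + ((d1/2) * (norm h)\<^sup>2 + (mu/2) * (norm (h ** U))\<^sup>2 + (mu/2) * (norm (W ** h ** U))\<^sup>2)" for h
    by (simp add: Lag_def lsm_expand_Q)
  show "\<bar>(d1/2) * (norm h)\<^sup>2 + (mu/2) * (norm (h ** U))\<^sup>2 + (mu/2) * (norm (W ** h ** U))\<^sup>2\<bar>
     \<le> lipQ ((norm U)\<^sup>2) ((norm W)\<^sup>2) * (norm h)\<^sup>2" for h :: "real^'r^'s"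
    using remainder_Q_le pos by simp
qed

lemma grad_lag_W:
  fixes U :: "real^'n^'r" and Q :: "real^'r^'s" and W :: "real^'s^'c"
  shows "grad (\<lambda>V. \<L> Om U Q V e1 e2 Z1 Z2) W = gradW U Q W e2 Z2"
proof (rule grad_eqI, rule gderiv_of_quadratic_expansion)
  show "\<L> Om U Q (W + h) e1 e2 Z1 Z2 = \<L> Om U Q W e1 e2 Z1 Z2 + inner (gradW U Q W e2 Z2) h
     + ((d2/2) * (norm h)\<^sup>2 + (mu/2) * (norm (h ** Q ** U))\<^sup>2)" for h
    by (simp add: Lag_def lsm_expand_W)
  show "\<bar>(d2/2) * (norm h)\<^sup>2 + (mu/2) * (norm (h ** Q ** U))\<^sup>2\<bar>
     \<le> lipW ((norm Q)\<^sup>2) ((norm U)\<^sup>2) * (norm h)\<^sup>2" for h :: "real^'s^'c"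
    using remainder_W_le pos by simp
qed

lemma U_step_descent:
  fixes U :: "real^'n^'r" and Q :: "real^'r^'s" and W :: "real^'s^'c"
  assumes cu: "cu \<ge> lipU ((norm Q)\<^sup>2) ((norm W)\<^sup>2) + 1"
    and U': "U' = soft (l1 / cu) (U - (1 / cu) *\<^sub>R gradU Om U Q W e1 e2 Z1 Z2)"
  shows "\<L> Om U' Q W e1 e2 Z1 Z2 + (norm (U' - U))\<^sup>2 \<le> \<L> Om U Q W e1 e2 Z1 Z2"
proof -
  define G where "G = gradU Om U Q W e1 e2 Z1 Z2"
  define d where "d = U' - U"
  have "cu > 0" using cu lip_nonneg(1)[of "(norm Q)\<^sup>2" "(norm W)\<^sup>2"] by simp
  then have "l1 * l1norm U' + inner (- G - cu *\<^sub>R (U' - U)) (U - U') \<le> l1 * l1norm U"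
    unfolding G_def by (rule prox_gradient_step[OF _ _ U']) (use pos in simp)
  moreover have "inner (- G - cu *\<^sub>R (U' - U)) (U - U') = inner G d + cu * (norm d)\<^sup>2"
    unfolding d_def by (simp add: power2_norm_eq_inner inner_diff_left inner_diff_right inner_commute algebra_simps)
  moreover have "\<L> Om U' Q W e1 e2 Z1 Z2 = \<L>\<^sub>s Om U Q W e1 e2 Z1 Z2 + inner G d
     + ((1/2) * (norm d)\<^sup>2 + (mu/2) * (norm (Q ** d))\<^sup>2 + (mu/2) * (norm (W ** Q ** d))\<^sup>2) + l1 * l1norm U'"
    unfolding Lag_def G_def using lsm_expand_U[of Om U d] by (simp add: d_def)
  moreover have "lipU ((norm Q)\<^sup>2) ((norm W)\<^sup>2) * (norm d)\<^sup>2 + (norm d)\<^sup>2 \<le> cu * (norm d)\<^sup>2"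
    using mult_right_mono[OF cu, of "(norm d)\<^sup>2"] by (simp add: algebra_simps)
  moreover have "\<L> Om U Q W e1 e2 Z1 Z2 = \<L>\<^sub>s Om U Q W e1 e2 Z1 Z2 + l1 * l1norm U"
    by (simp add: Lag_def)
  ultimately show ?thesis
    using remainder_U_le[of d Q W] unfolding d_def[symmetric] by linarith
qed

lemma Q_step_descent:
  fixes U :: "real^'n^'r" and Q :: "real^'r^'s" and W :: "real^'s^'c"
  assumes cq: "cq \<ge> lipQ ((norm U)\<^sup>2) ((norm W)\<^sup>2) + 1"
    and Q': "Q' = Q - (1 / cq) *\<^sub>R gradQ U Q W e1 e2 Z1 Z2"
  shows "\<L> Om U Q' W e1 e2 Z1 Z2 + (norm (Q' - Q))\<^sup>2 \<le> \<L> Om U Q W e1 e2 Z1 Z2"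
proof -
  have "cq > 0" using cq lip_nonneg(2)[of "(norm U)\<^sup>2" "(norm W)\<^sup>2"] by simp
  have "\<L> Om U Q' W e1 e2 Z1 Z2 \<le> \<L> Om U Q W e1 e2 Z1 Z2
      - (cq - lipQ ((norm U)\<^sup>2) ((norm W)\<^sup>2)) * (norm (Q' - Q))\<^sup>2"
  proof (rule gradient_step_descent[OF _ _ \<open>cq > 0\<close> Q'])
    show "\<L> Om U (Q + h) W e1 e2 Z1 Z2 = \<L> Om U Q W e1 e2 Z1 Z2 + inner (gradQ U Q W e1 e2 Z1 Z2) h
      + ((d1/2) * (norm h)\<^sup>2 + (mu/2) * (norm (h ** U))\<^sup>2 + (mu/2) * (norm (W ** h ** U))\<^sup>2)" for h
      by (simp add: Lag_def lsm_expand_Q)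
  qed (rule remainder_Q_le)
  moreover have "(norm (Q' - Q))\<^sup>2 \<le> (cq - lipQ ((norm U)\<^sup>2) ((norm W)\<^sup>2)) * (norm (Q' - Q))\<^sup>2"
    using mult_right_mono[of 1 _ "(norm (Q' - Q))\<^sup>2"] cq by simp
  ultimately show ?thesis by linarith
qed

lemma W_step_descent:
  fixes U :: "real^'n^'r" and Q :: "real^'r^'s" and W :: "real^'s^'c"
  assumes cw: "cw \<ge> lipW ((norm Q)\<^sup>2) ((norm U)\<^sup>2) + 1"
    and W': "W' = W - (1 / cw) *\<^sub>R gradW U Q W e2 Z2"
  shows "\<L> Om U Q W' e1 e2 Z1 Z2 + (norm (W' - W))\<^sup>2 \<le> \<L> Om U Q W e1 e2 Z1 Z2"
proof -
  have "cw > 0" using cw lip_nonneg(3)[of "(norm Q)\<^sup>2" "(norm U)\<^sup>2"] by simp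
  have "\<L> Om U Q W' e1 e2 Z1 Z2 \<le> \<L> Om U Q W e1 e2 Z1 Z2
      - (cw - lipW ((norm Q)\<^sup>2) ((norm U)\<^sup>2)) * (norm (W' - W))\<^sup>2"
  proof (rule gradient_step_descent[OF _ _ \<open>cw > 0\<close> W'])
    show "\<L> Om U Q (W + h) e1 e2 Z1 Z2 = \<L> Om U Q W e1 e2 Z1 Z2 + inner (gradW U Q W e2 Z2) h
      + ((d2/2) * (norm h)\<^sup>2 + (mu/2) * (norm (h ** Q ** U))\<^sup>2)" for h
      by (simp add: Lag_def lsm_expand_W)
  qed (rule remainder_W_le)
  moreover have "(norm (W' - W))\<^sup>2 \<le> (cw - lipW ((norm Q)\<^sup>2) ((norm U)\<^sup>2)) * (norm (W' - W))\<^sup>2"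
    using mult_right_mono[of 1 _ "(norm (W' - W))\<^sup>2"] cw by simp
  ultimately show ?thesis by linarith
qed

lemma Om_minimiser:
  assumes min: "\<And>V. \<L> Om' U Q W e1 e2 Z1 Z2 \<le> \<L> V U Q W e1 e2 Z1 Z2"
  shows "gradOm Om' U = 0"
    and "\<L> Om' U Q W e1 e2 Z1 Z2 + (l2/2) * (norm (Om - Om'))\<^sup>2 \<le> \<L> Om U Q W e1 e2 Z1 Z2"
proof -
  let ?q = "\<lambda>h. (1/2) * (norm (h ** X))\<^sup>2 + (l2/2) * (norm h)\<^sup>2"
  have expand: "\<L> (Om' + h) U Q W e1 e2 Z1 Z2 = \<L> Om' U Q W e1 e2 Z1 Z2 + inner (gradOm Om' U) h + ?q h" for h
    by (simp add: Lag_def lsm_expand_Om)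
  have "?q (t *\<^sub>R h) = t\<^sup>2 * ?q h" for t h
    by (simp add: matrix_mult_scaleR_left power_mult_distrib algebra_simps)
  note m = minimiser_of_quadratic_expansion[OF expand this min]
  show "gradOm Om' U = 0" by (rule m(1))
  show "\<L> Om' U Q W e1 e2 Z1 Z2 + (l2/2) * (norm (Om - Om'))\<^sup>2 \<le> \<L> Om U Q W e1 e2 Z1 Z2"
    using m(2)[of Om] by simp
qed

lemma e1_minimiser:
  assumes min: "\<And>V. \<L> Om U Q W e1' e2 Z1 Z2 \<le> \<L> Om U Q W V e2 Z1 Z2"
  shows "grade1 U Q e1' Z1 = 0"
    and "\<L> Om U Q W e1 e2 Z1 Z2 = \<L> Om U Q W e1' e2 Z1 Z2 + ((r1 + mu)/2) * (norm (e1 - e1'))\<^sup>2"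
proof -
  let ?q = "\<lambda>h. ((r1 + mu)/2) * (norm h)\<^sup>2"
  have expand: "\<L> Om U Q W (e1' + h) e2 Z1 Z2 = \<L> Om U Q W e1' e2 Z1 Z2 + inner (grade1 U Q e1' Z1) h + ?q h" for h
    by (simp add: Lag_def lsm_expand_e1)
  have "?q (t *\<^sub>R h) = t\<^sup>2 * ?q h" for t h
    by (simp add: power_mult_distrib)
  note m = minimiser_of_quadratic_expansion[OF expand this min]
  show "grade1 U Q e1' Z1 = 0" by (rule m(1))
  show "\<L> Om U Q W e1 e2 Z1 Z2 = \<L> Om U Q W e1' e2 Z1 Z2 + ((r1 + mu)/2) * (norm (e1 - e1'))\<^sup>2"
    by (rule m(2))
qed

lemma e2_minimiser:
  assumes min: "\<And>V. \<L> Om U Q W e1 e2' Z1 Z2 \<le> \<L> Om U Q W e1 V Z1 Z2"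
  shows "grade2 U Q W e2' Z2 = 0"
    and "\<L> Om U Q W e1 e2 Z1 Z2 = \<L> Om U Q W e1 e2' Z1 Z2 + ((r2 + mu)/2) * (norm (e2 - e2'))\<^sup>2"
proof -
  let ?q = "\<lambda>h. ((r2 + mu)/2) * (norm h)\<^sup>2"
  have expand: "\<L> Om U Q W e1 (e2' + h) Z1 Z2 = \<L> Om U Q W e1 e2' Z1 Z2 + inner (grade2 U Q W e2' Z2) h + ?q h" for h
    by (simp add: Lag_def lsm_expand_e2)
  have "?q (t *\<^sub>R h) = t\<^sup>2 * ?q h" for t h
    by (simp add: power_mult_distrib)
  note m = minimiser_of_quadratic_expansion[OF expand this min]
  show "grade2 U Q W e2' Z2 = 0" by (rule m(1))
  show "\<L> Om U Q W e1 e2 Z1 Z2 = \<L> Om U Q W e1 e2' Z1 Z2 + ((r2 + mu)/2) * (norm (e2 - e2'))\<^sup>2"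
    by (rule m(2))
qed

lemma lag_dual_step:
  assumes "Z1' = Z1 + mu *\<^sub>R (H - Q ** U - e1)" and "Z2' = Z2 + mu *\<^sub>R (Y - W ** Q ** U - e2)"
  shows "\<L> Om U Q W e1 e2 Z1' Z2'
     = \<L> Om U Q W e1 e2 Z1 Z2 + ((norm (Z1' - Z1))\<^sup>2 + (norm (Z2' - Z2))\<^sup>2) / mu"
proof -
  define R1 where "R1 = H - Q ** U - e1"
  define R2 where "R2 = Y - W ** Q ** U - e2"
  have d: "Z1' - Z1 = mu *\<^sub>R R1" "Z2' - Z2 = mu *\<^sub>R R2"
    using assms by (simp_all add: R1_def R2_def)
  have "\<L> Om U Q W e1 e2 Z1' Z2' = \<L> Om U Q W e1 e2 Z1 Z2 + (inner (Z1' - Z1) R1 + inner (Z2' - Z2) R2)"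
    unfolding Lag_def Ls_def R1_def R2_def by (simp add: inner_diff_left)
  also have "inner (Z1' - Z1) R1 + inner (Z2' - Z2) R2 = ((norm (Z1' - Z1))\<^sup>2 + (norm (Z2' - Z2))\<^sup>2) / mu"
    unfolding d using pos(7) by (simp add: dot_square_norm power_mult_distrib power2_eq_square field_simps)
  finally show ?thesis .
qed


lemma lag_coercive:
  "l1 * l1norm U + (d1/2) * (norm Q)\<^sup>2 + (d2/2) * (norm W)\<^sup>2 + (l2/2) * (norm Om)\<^sup>2
      + (r1/2) * (norm e1)\<^sup>2 + (r2/2) * (norm e2)\<^sup>2
     \<le> \<L> Om U Q W e1 e2 Z1 Z2 + ((norm Z1)\<^sup>2 + (norm Z2)\<^sup>2) / (2 * mu)"
  using inner_plus_square_lower_bound[OF pos(7), of Z1 "H - Q ** U - e1"]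
    inner_plus_square_lower_bound[OF pos(7), of Z2 "Y - W ** Q ** U - e2"]
    zero_le_power2[of "norm (U - Om ** X)"]
  unfolding Lag_def Ls_def by (simp add: add_divide_distrib)

lemma components_bounded:
  fixes U :: "real^'n^'r" and Q :: "real^'r^'s" and W :: "real^'s^'c"
  assumes "\<L> Om U Q W e1 e2 Z1 Z2 + ((norm Z1)\<^sup>2 + (norm Z2)\<^sup>2) / (2 * mu) \<le> B"
  shows "(norm Q)\<^sup>2 \<le> 2 * B / d1" "(norm W)\<^sup>2 \<le> 2 * B / d2" "norm U \<le> B / l1"
    "(norm Om)\<^sup>2 \<le> 2 * B / l2" "(norm e1)\<^sup>2 \<le> 2 * B / r1" "(norm e2)\<^sup>2 \<le> 2 * B / r2"
    "0 \<le> B"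
proof -
  have sum: "l1 * norm U + (d1/2) * (norm Q)\<^sup>2 + (d2/2) * (norm W)\<^sup>2 + (l2/2) * (norm Om)\<^sup>2
      + (r1/2) * (norm e1)\<^sup>2 + (r2/2) * (norm e2)\<^sup>2 \<le> B"
    using lag_coercive[of U Q W Om e1 e2 Z1 Z2] assms norm_le_l1norm[of U] pos(1)
      mult_left_mono[of "norm U" "l1norm U" l1] by linarith
  have "0 \<le> l1 * norm U" "0 \<le> (d1/2) * (norm Q)\<^sup>2" "0 \<le> (d2/2) * (norm W)\<^sup>2"
    "0 \<le> (l2/2) * (norm Om)\<^sup>2" "0 \<le> (r1/2) * (norm e1)\<^sup>2" "0 \<le> (r2/2) * (norm e2)\<^sup>2"
    using pos by simp_all
  then have "l1 * norm U \<le> B" "(d1/2) * (norm Q)\<^sup>2 \<le> B" "(d2/2) * (norm W)\<^sup>2 \<le> B"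
    "(l2/2) * (norm Om)\<^sup>2 \<le> B" "(r1/2) * (norm e1)\<^sup>2 \<le> B" "(r2/2) * (norm e2)\<^sup>2 \<le> B" "0 \<le> B"
    using sum by linarith+
  then show "(norm Q)\<^sup>2 \<le> 2 * B / d1" "(norm W)\<^sup>2 \<le> 2 * B / d2" "norm U \<le> B / l1"
    "(norm Om)\<^sup>2 \<le> 2 * B / l2" "(norm e1)\<^sup>2 \<le> 2 * B / r1" "(norm e2)\<^sup>2 \<le> 2 * B / r2" "0 \<le> B"
    using pos by (simp_all add: field_simps)
qed

text \<open>The thresholds bound the block Lipschitz moduli of the smooth part on the sublevel set at
  level B, which every intermediate point of the sweep stays in.\<close>
lemma primal_sweep_descent:
  fixes U U' :: "real^'n^'r" and Q Q' :: "real^'r^'s" and W W' :: "real^'s^'c"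
    and Om Om' :: "real^'m^'r" and e1 e1' :: "real^'n^'s" and e2 e2' :: "real^'n^'c"
  assumes bound: "\<L> Om U Q W e1 e2 Z1 Z2 + ((norm Z1)\<^sup>2 + (norm Z2)\<^sup>2) / (2 * mu) \<le> B"
    and cu: "cu \<ge> lipU (2 * B / d1) (2 * B / d2) + 1"
    and cq: "cq \<ge> lipQ ((B / l1)\<^sup>2) (2 * B / d2) + 1"
    and cw: "cw \<ge> lipW (2 * B / d1) ((B / l1)\<^sup>2) + 1"
    and U': "U' = soft (l1 / cu) (U - (1 / cu) *\<^sub>R gradU Om U Q W e1 e2 Z1 Z2)"
    and Q': "Q' = Q - (1 / cq) *\<^sub>R gradQ U' Q W e1 e2 Z1 Z2"
    and W': "W' = W - (1 / cw) *\<^sub>R gradW U' Q' W e2 Z2"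
    and Om': "\<And>V. \<L> Om' U' Q' W' e1 e2 Z1 Z2 \<le> \<L> V U' Q' W' e1 e2 Z1 Z2"
    and e1': "\<And>V. \<L> Om' U' Q' W' e1' e2 Z1 Z2 \<le> \<L> Om' U' Q' W' V e2 Z1 Z2"
    and e2': "\<And>V. \<L> Om' U' Q' W' e1' e2' Z1 Z2 \<le> \<L> Om' U' Q' W' e1' V Z1 Z2"
  shows "\<L> Om' U' Q' W' e1' e2' Z1 Z2 + ((norm (U' - U))\<^sup>2 + (norm (Q' - Q))\<^sup>2 + (norm (W' - W))\<^sup>2
          + (l2/2) * (norm (Om - Om'))\<^sup>2 + ((r1 + mu)/2) * (norm (e1 - e1'))\<^sup>2
          + ((r2 + mu)/2) * (norm (e2 - e2'))\<^sup>2)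
        \<le> \<L> Om U Q W e1 e2 Z1 Z2"
proof -
  note bounds0 = components_bounded[OF bound]
  have U_desc: "\<L> Om U' Q W e1 e2 Z1 Z2 + (norm (U' - U))\<^sup>2 \<le> \<L> Om U Q W e1 e2 Z1 Z2"
    using lip_mono(1)[OF zero_le_power2 bounds0(1) zero_le_power2 bounds0(2)] cu
    by (intro U_step_descent[OF _ U']) linarith
  then have "\<L> Om U' Q W e1 e2 Z1 Z2 + ((norm Z1)\<^sup>2 + (norm Z2)\<^sup>2) / (2 * mu) \<le> B"
    using bound zero_le_power2[of "norm (U' - U)"] by linarith
  then have U'_bound: "(norm U')\<^sup>2 \<le> (B / l1)\<^sup>2"
    by (intro power_mono components_bounded(3)) simp_all
  have Q_desc: "\<L> Om U' Q' W e1 e2 Z1 Z2 + (norm (Q' - Q))\<^sup>2 \<le> \<L> Om U' Q W e1 e2 Z1 Z2"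
    using lip_mono(2)[OF zero_le_power2 U'_bound zero_le_power2 bounds0(2)] cq
    by (intro Q_step_descent[OF _ Q']) linarith
  then have "\<L> Om U' Q' W e1 e2 Z1 Z2 + ((norm Z1)\<^sup>2 + (norm Z2)\<^sup>2) / (2 * mu) \<le> B"
    using U_desc bound zero_le_power2[of "norm (U' - U)"] zero_le_power2[of "norm (Q' - Q)"] by linarith
  note Q'_bound = components_bounded(1)[OF this]
  have W_desc: "\<L> Om U' Q' W' e1 e2 Z1 Z2 + (norm (W' - W))\<^sup>2 \<le> \<L> Om U' Q' W e1 e2 Z1 Z2"
    using lip_mono(3)[OF zero_le_power2 Q'_bound zero_le_power2 U'_bound] cw
    by (intro W_step_descent[OF _ W']) linarith
  show ?thesis
    using U_desc Q_desc W_desc Om_minimiser(2)[OF Om', of Om]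
      e1_minimiser(2)[OF e1', of e1] e2_minimiser(2)[OF e2', of e2]
    by linarith
qed


definition gradLs where
  "gradLs = (\<lambda>(Om, U, Q, W, e1, e2, Z1, Z2).
     (gradOm Om U, gradU Om U Q W e1 e2 Z1 Z2, gradQ U Q W e1 e2 Z1 Z2, gradW U Q W e2 Z2,
      grade1 U Q e1 Z1, grade2 U Q W e2 Z2, H - Q ** U - e1, Y - W ** Q ** U - e2))"

lemma Ls_th_projections:
  "Ls_th X H Y l2 r1 r2 d1 d2 mu = (\<lambda>T. \<L>\<^sub>s (fst T) (fst (snd T)) (fst (snd (snd T)))
     (fst (snd (snd (snd T)))) (fst (snd (snd (snd (snd T))))) (fst (snd (snd (snd (snd (snd T))))))
     (fst (snd (snd (snd (snd (snd (snd T))))))) (snd (snd (snd (snd (snd (snd (snd T))))))))"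
  by (auto simp: Ls_th_def split: prod.split)

lemma gderiv_Ls_th: "GDERIV (Ls_th X H Y l2 r1 r2 d1 d2 mu) Th :> gradLs Th"
proof -
  obtain Om U Q W e1 e2 Z1 Z2 where Th: "Th = (Om, U, Q, W, e1, e2, Z1, Z2)" by (cases Th) auto
  have inner_grads:
    "inner h1 (gradOm Om U) = inner (gradOm Om U) h1"
    "inner h2 (gradU Om U Q W e1 e2 Z1 Z2) = inner (gradU Om U Q W e1 e2 Z1 Z2) h2"
    "inner h3 (gradQ U Q W e1 e2 Z1 Z2) = inner (gradQ U Q W e1 e2 Z1 Z2) h3"
    "inner h4 (gradW U Q W e2 Z2) = inner (gradW U Q W e2 Z2) h4" for h1 h2 h3 h4
    by (simp_all add: inner_commute)
  show ?thesis
    unfolding gderiv_def Ls_th_projections Ls_def power2_norm_eq_inner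
    apply (rule derivative_eq_intros refl | simp)+
    apply (rule ext)
    subgoal for h
    proof -
      obtain a b c d e f z1 z2 where h: "h = (a, b, c, d, e, f, z1, z2)" by (metis prod.collapse)
      show ?thesis unfolding h
        by (simp add: Th gradLs_def inner_grads inner_gradOm inner_gradU inner_gradQ
          inner_gradW grade1_def grade2_def inner_diff_right inner_diff_left inner_add_left
          inner_add_right matrix_mult_distribs matrix_mul_assoc, simp add: inner_commute field_simps)
    qed
    done
qed


lemma stationary_in_Sset:
  fixes Om :: "real^'m^'r" and U :: "real^'n^'r" and Q :: "real^'r^'s" and W :: "real^'s^'c"
  assumes "thnorm (Om, U, Q, W, e1, e2, Z1, Z2) < R"
    and "gradOm Om U = 0" "gradQ U Q W e1 e2 Z1 Z2 = 0" "gradW U Q W e2 Z2 = 0"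
      "grade1 U Q e1 Z1 = 0" "grade2 U Q W e2 Z2 = 0"
    and feasible: "H = Q ** U + e1" "Y = W ** Q ** U + e2"
    and prox: "\<And>V. l1 * l1norm U + inner (- gradU Om U Q W e1 e2 Z1 Z2) (V - U) \<le> l1 * l1norm V"
  shows "(Om, U, Q, W, e1, e2, Z1, Z2) \<in> Sset X H Y l1 l2 r1 r2 d1 d2 mu R"
proof -
  define Th where "Th = (Om, U, Q, W, e1, e2, Z1, Z2)"
  define G where "G = gradU Om U Q W e1 e2 Z1 Z2"
  have "H - Q ** U - e1 = 0" "Y - W ** Q ** U - e2 = 0" using feasible by simp_all
  have "grad (Ls_th X H Y l2 r1 r2 d1 d2 mu) Th = (0, G, 0, 0, 0, 0, 0, 0)"
    using assms(2-6) \<open>H - Q ** U - e1 = 0\<close> \<open>Y - W ** Q ** U - e2 = 0\<close> unfolding grad_eqI[OF gderiv_Ls_th]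
    by (simp add: gradLs_def Th_def G_def)
  then have neg: "- grad (Ls_th X H Y l2 r1 r2 d1 d2 mu) Th = l1 *\<^sub>R (0, - (1/l1) *\<^sub>R G, 0, 0, 0, 0, 0, 0)"
    using pos by simp
  have sub: "(0, - (1/l1) *\<^sub>R G, 0, 0, 0, 0, 0, 0) \<in> subdiff (\<lambda>T. l1norm (fst (snd T))) Th"
    unfolding subdiff_def
  proof (intro CollectI allI)
    fix T :: "('m,'n,'r,'s,'c) theta"
    have "(l1 * l1norm U + inner (- G) (fst (snd T) - U)) / l1 \<le> l1 * l1norm (fst (snd T)) / l1"
      using prox[of "fst (snd T)"] pos(1) by (simp add: G_def pos_divide_le_eq mult.commute)
    then show "l1norm (fst (snd Th)) + inner (0, - (1/l1) *\<^sub>R G, 0, 0, 0, 0, 0, 0) (T - Th)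
        \<le> l1norm (fst (snd T))"
      using pos by (simp add: Th_def inner_prod_def diff_divide_distrib)
  qed
  have "- grad (Ls_th X H Y l2 r1 r2 d1 d2 mu) Th \<in> (\<lambda>g. l1 *\<^sub>R g) ` subdiff (\<lambda>T. l1norm (fst (snd T))) Th"
    by (rule rev_image_eqI[OF sub]) (simp only: neg)
  then show ?thesis
    using assms(1) feasible unfolding Sset_def Th_def by simp
qed

end

section \<open>The linearized ADM iteration\<close>

text \<open>The step constants cu, cq, cw stand for mu eta_U, mu eta_Q, mu eta_W.\<close>
locale adm_run = adm_problem X H Y l1 l2 r1 r2 d1 d2 mu
  for X :: "real^'n^'m" and H :: "real^'n^'s" and Y :: "real^'n^'c" and l1 l2 r1 r2 d1 d2 mu :: real +
  fixes cu cq cw :: real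
    and Om :: "nat \<Rightarrow> real^'m^'r" and U :: "nat \<Rightarrow> real^'n^'r" and Q :: "nat \<Rightarrow> real^'r^'s"
    and W :: "nat \<Rightarrow> real^'s^'c" and E1 :: "nat \<Rightarrow> real^'n^'s" and E2 :: "nat \<Rightarrow> real^'n^'c"
    and Z1 :: "nat \<Rightarrow> real^'n^'s" and Z2 :: "nat \<Rightarrow> real^'n^'c"
  assumes U_step: "U (Suc k) = soft (l1 / cu) (U k - (1 / cu) *\<^sub>R
      grad (\<lambda>V. \<L>\<^sub>s (Om k) V (Q k) (W k) (E1 k) (E2 k) (Z1 k) (Z2 k)) (U k))"
    and Q_step: "Q (Suc k) = Q k - (1 / cq) *\<^sub>R
      grad (\<lambda>V. \<L> (Om k) (U (Suc k)) V (W k) (E1 k) (E2 k) (Z1 k) (Z2 k)) (Q k)"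
    and W_step: "W (Suc k) = W k - (1 / cw) *\<^sub>R
      grad (\<lambda>V. \<L> (Om k) (U (Suc k)) (Q (Suc k)) V (E1 k) (E2 k) (Z1 k) (Z2 k)) (W k)"
    and Om_step: "\<L> (Om (Suc k)) (U (Suc k)) (Q (Suc k)) (W (Suc k)) (E1 k) (E2 k) (Z1 k) (Z2 k)
      \<le> \<L> V (U (Suc k)) (Q (Suc k)) (W (Suc k)) (E1 k) (E2 k) (Z1 k) (Z2 k)"
    and E1_step: "\<L> (Om (Suc k)) (U (Suc k)) (Q (Suc k)) (W (Suc k)) (E1 (Suc k)) (E2 k) (Z1 k) (Z2 k)
      \<le> \<L> (Om (Suc k)) (U (Suc k)) (Q (Suc k)) (W (Suc k)) V1 (E2 k) (Z1 k) (Z2 k)"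
    and E2_step: "\<L> (Om (Suc k)) (U (Suc k)) (Q (Suc k)) (W (Suc k)) (E1 (Suc k)) (E2 (Suc k)) (Z1 k) (Z2 k)
      \<le> \<L> (Om (Suc k)) (U (Suc k)) (Q (Suc k)) (W (Suc k)) (E1 (Suc k)) V2 (Z1 k) (Z2 k)"
    and Z1_step: "Z1 (Suc k) = Z1 k + mu *\<^sub>R (H - Q (Suc k) ** U (Suc k) - E1 (Suc k))"
    and Z2_step: "Z2 (Suc k) = Z2 k + mu *\<^sub>R (Y - W (Suc k) ** Q (Suc k) ** U (Suc k) - E2 (Suc k))"
begin

definition iter :: "nat \<Rightarrow> ('m,'n,'r,'s,'c) theta" where
  "iter k = (Om k, U k, Q k, W k, E1 k, E2 k, Z1 k, Z2 k)"

definition primal :: "nat \<Rightarrow> (real^'m^'r) \<times> (real^'n^'r) \<times> (real^'r^'s) \<times> (real^'s^'c) \<times>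
    (real^'n^'s) \<times> (real^'n^'c)" where
  "primal k = (Om k, U k, Q k, W k, E1 k, E2 k)"

definition lag_seq :: "nat \<Rightarrow> real" where
  "lag_seq k = \<L> (Om k) (U k) (Q k) (W k) (E1 k) (E2 k) (Z1 k) (Z2 k)"

definition dual_energy :: "nat \<Rightarrow> real" where
  "dual_energy k = ((norm (Z1 k))\<^sup>2 + (norm (Z2 k))\<^sup>2) / (2 * mu)"

definition lag_after_sweep :: "nat \<Rightarrow> real" where
  "lag_after_sweep k = \<L> (Om (Suc k)) (U (Suc k)) (Q (Suc k)) (W (Suc k)) (E1 (Suc k)) (E2 (Suc k)) (Z1 k) (Z2 k)"

lemma U_update: "U (Suc k) = soft (l1 / cu)
    (U k - (1 / cu) *\<^sub>R gradU (Om k) (U k) (Q k) (W k) (E1 k) (E2 k) (Z1 k) (Z2 k))"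
  using U_step by (simp add: grad_lsm_U)

lemma Q_update: "Q (Suc k) = Q k - (1 / cq) *\<^sub>R gradQ (U (Suc k)) (Q k) (W k) (E1 k) (E2 k) (Z1 k) (Z2 k)"
  using Q_step by (simp add: grad_lag_Q)

lemma W_update: "W (Suc k) = W k - (1 / cw) *\<^sub>R gradW (U (Suc k)) (Q (Suc k)) (W k) (E2 k) (Z2 k)"
  using W_step by (simp add: grad_lag_W)

lemma gradOm_vanishes: "gradOm (Om (Suc k)) (U (Suc k)) = 0"
  using Om_minimiser(1)[OF Om_step] .

lemma grade1_vanishes: "grade1 (U (Suc k)) (Q (Suc k)) (E1 (Suc k)) (Z1 k) = 0"
  using e1_minimiser(1)[OF E1_step] .

lemma grade2_vanishes: "grade2 (U (Suc k)) (Q (Suc k)) (W (Suc k)) (E2 (Suc k)) (Z2 k) = 0"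
  using e2_minimiser(1)[OF E2_step] .

text \<open>The optimality condition r1 e1 = Z1 + mu (H - Q U - e1) of the e1-update is exactly the dual
  update.\<close>
lemma Z1_eq: "Z1 (Suc k) = r1 *\<^sub>R E1 (Suc k)"
  using grade1_vanishes[of k] by (simp add: grade1_def Z1_step algebra_simps)

lemma Z2_eq: "Z2 (Suc k) = r2 *\<^sub>R E2 (Suc k)"
  using grade2_vanishes[of k] by (simp add: grade2_def Z2_step algebra_simps)

lemma lag_seq_Suc:
  "lag_seq (Suc k) = lag_after_sweep k + ((norm (Z1 (Suc k) - Z1 k))\<^sup>2 + (norm (Z2 (Suc k) - Z2 k))\<^sup>2) / mu"
  unfolding lag_seq_def lag_after_sweep_def by (rule lag_dual_step[OF Z1_step Z2_step])

definition sweep_gap :: "nat \<Rightarrow> real" where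
  "sweep_gap k = (norm (U (Suc k) - U k))\<^sup>2 + (norm (Q (Suc k) - Q k))\<^sup>2 + (norm (W (Suc k) - W k))\<^sup>2
     + (l2/2) * (norm (Om (Suc k) - Om k))\<^sup>2 + ((r1 + mu)/2) * (norm (E1 (Suc k) - E1 k))\<^sup>2
     + ((r2 + mu)/2) * (norm (E2 (Suc k) - E2 k))\<^sup>2"

text \<open>Z 0 is arbitrary, so the first dual update is not paid for by the slack decrease; this bounds
  the augmented Lagrangian after it.\<close>
definition first_step_bound :: real where
  "first_step_bound = lag_seq 0 + 4 * dual_energy 0 + 4 * (r1 + r2) / mu * (lag_seq 0 + dual_energy 0)"

definition dual_ratio :: real where
  "dual_ratio = r1 / (mu - r1) + r2 / (mu - r2)"

lemma sweep_descent:
  assumes "lag_seq k + dual_energy k \<le> B"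
    and "lipU (2 * B / d1) (2 * B / d2) + 1 \<le> cu"
    and "lipQ ((B / l1)\<^sup>2) (2 * B / d2) + 1 \<le> cq"
    and "lipW (2 * B / d1) ((B / l1)\<^sup>2) + 1 \<le> cw"
  shows "lag_after_sweep k + sweep_gap k \<le> lag_seq k"
  using primal_sweep_descent[OF assms(1)[unfolded lag_seq_def dual_energy_def] assms(2-4)
      U_update Q_update W_update Om_step E1_step E2_step]
  unfolding lag_after_sweep_def lag_seq_def sweep_gap_def
  by (simp add: norm_minus_commute)

lemma sweep_gap_nonneg: "0 \<le> sweep_gap k"
  unfolding sweep_gap_def using pos by simp

end

locale adm_run_bounded = adm_run X H Y l1 l2 r1 r2 d1 d2 mu cu cq cw Om U Q W E1 E2 Z1 Z2
  for X :: "real^'n^'m" and H :: "real^'n^'s" and Y :: "real^'n^'c" and l1 l2 r1 r2 d1 d2 mu :: real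
    and cu cq cw :: real
    and Om :: "nat \<Rightarrow> real^'m^'r" and U :: "nat \<Rightarrow> real^'n^'r" and Q :: "nat \<Rightarrow> real^'r^'s"
    and W :: "nat \<Rightarrow> real^'s^'c" and E1 :: "nat \<Rightarrow> real^'n^'s" and E2 :: "nat \<Rightarrow> real^'n^'c"
    and Z1 :: "nat \<Rightarrow> real^'n^'s" and Z2 :: "nat \<Rightarrow> real^'n^'c" +
  fixes LS :: real
  assumes mu_gt: "r1 < mu" "r2 < mu"
    and LS_eq: "LS = max (lag_seq 0 + dual_energy 0) ((1 + dual_ratio) * first_step_bound)"
    and cu_ge: "lipU (2 * LS / d1) (2 * LS / d2) + 1 \<le> cu"
    and cq_ge: "lipQ ((LS / l1)\<^sup>2) (2 * LS / d2) + 1 \<le> cq"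
    and cw_ge: "lipW (2 * LS / d1) ((LS / l1)\<^sup>2) + 1 \<le> cw"
begin

lemma LS_init: "lag_seq 0 + dual_energy 0 \<le> LS"
  and LS_later: "(1 + dual_ratio) * first_step_bound \<le> LS"
  by (simp_all add: LS_eq)

text \<open>(r + mu)/2 - r^2/mu is what remains of the slack decrease after paying for the dual
  ascent r^2/mu |Delta e|^2.\<close>
definition descent_rate :: real where
  "descent_rate = min 1 (min (l2/2) (min ((r1 + mu)/2 - r1\<^sup>2/mu) ((r2 + mu)/2 - r2\<^sup>2/mu)))"

lemma descent_rate_pos: "0 < descent_rate"
proof -
  have "r1\<^sup>2/mu < r1" "r2\<^sup>2/mu < r2"
    using mu_gt pos by (simp_all add: divide_less_eq power2_eq_square)
  moreover have "r1 < (r1 + mu)/2" "r2 < (r2 + mu)/2"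
    using mu_gt by simp_all
  ultimately have "r1\<^sup>2/mu < (r1 + mu)/2" "r2\<^sup>2/mu < (r2 + mu)/2"
    by (meson less_trans)+
  then show ?thesis unfolding descent_rate_def using pos by simp
qed

lemma dual_ratio_nonneg: "0 \<le> dual_ratio"
  using mu_gt pos by (simp add: dual_ratio_def)

lemma first_step_bounded: "lag_seq 1 \<le> first_step_bound"
proof -
  define P0 where "P0 = lag_seq 0 + dual_energy 0"
  have sweep: "lag_after_sweep 0 + sweep_gap 0 \<le> lag_seq 0"
    by (rule sweep_descent[OF LS_init cu_ge cq_ge cw_ge])
  then have "lag_after_sweep 0 + dual_energy 0 \<le> P0"
    using sweep_gap_nonneg[of 0] by (simp add: P0_def)
  note slack_bounds = components_bounded(5,6)[OF this[unfolded lag_after_sweep_def dual_energy_def]]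
  have "(norm (Z1 1 - Z1 0))\<^sup>2 \<le> 2 * (r1\<^sup>2 * (norm (E1 1))\<^sup>2) + 2 * (norm (Z1 0))\<^sup>2"
    using power2_norm_diff_le[of "Z1 1" "Z1 0"] Z1_eq[of 0] pos by (simp add: power_mult_distrib)
  also have "\<dots> \<le> 4 * r1 * P0 + 2 * (norm (Z1 0))\<^sup>2"
    using mult_left_mono[OF slack_bounds(1), of "r1\<^sup>2"] pos by (simp add: power2_eq_square)
  finally have Z1_jump: "(norm (Z1 1 - Z1 0))\<^sup>2 \<le> 4 * r1 * P0 + 2 * (norm (Z1 0))\<^sup>2" .
  have "(norm (Z2 1 - Z2 0))\<^sup>2 \<le> 2 * (r2\<^sup>2 * (norm (E2 1))\<^sup>2) + 2 * (norm (Z2 0))\<^sup>2"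
    using power2_norm_diff_le[of "Z2 1" "Z2 0"] Z2_eq[of 0] pos by (simp add: power_mult_distrib)
  also have "\<dots> \<le> 4 * r2 * P0 + 2 * (norm (Z2 0))\<^sup>2"
    using mult_left_mono[OF slack_bounds(2), of "r2\<^sup>2"] pos by (simp add: power2_eq_square)
  finally have Z2_jump: "(norm (Z2 1 - Z2 0))\<^sup>2 \<le> 4 * r2 * P0 + 2 * (norm (Z2 0))\<^sup>2" .
  have "((norm (Z1 1 - Z1 0))\<^sup>2 + (norm (Z2 1 - Z2 0))\<^sup>2) / mu
      \<le> (4 * r1 * P0 + 2 * (norm (Z1 0))\<^sup>2 + (4 * r2 * P0 + 2 * (norm (Z2 0))\<^sup>2)) / mu"
    using Z1_jump Z2_jump pos by (intro divide_right_mono) auto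
  also have "\<dots> = 4 * dual_energy 0 + 4 * (r1 + r2) / mu * P0"
    using pos by (simp add: dual_energy_def field_simps)
  finally show ?thesis
    using lag_seq_Suc[of 0] sweep sweep_gap_nonneg[of 0]
    unfolding first_step_bound_def P0_def by simp
qed


lemma descent_rate_le:
  "descent_rate \<le> 1" "descent_rate \<le> l2/2" "descent_rate \<le> (r1 + mu)/2 - r1\<^sup>2/mu"
  "descent_rate \<le> (r2 + mu)/2 - r2\<^sup>2/mu"
  unfolding descent_rate_def by (meson min.cobounded1 min.cobounded2 order_trans)+

lemma later_descent:
  assumes "lag_seq (Suc k) + dual_energy (Suc k) \<le> LS"
  shows "lag_seq (Suc (Suc k)) + descent_rate * (norm (primal (Suc (Suc k)) - primal (Suc k)))\<^sup>2
    \<le> lag_seq (Suc k)"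
proof -
  define dOm dU dQ dW dE1 dE2 where
    "dOm = (norm (Om (Suc (Suc k)) - Om (Suc k)))\<^sup>2" and "dU = (norm (U (Suc (Suc k)) - U (Suc k)))\<^sup>2"
    and "dQ = (norm (Q (Suc (Suc k)) - Q (Suc k)))\<^sup>2" and "dW = (norm (W (Suc (Suc k)) - W (Suc k)))\<^sup>2"
    and "dE1 = (norm (E1 (Suc (Suc k)) - E1 (Suc k)))\<^sup>2" and "dE2 = (norm (E2 (Suc (Suc k)) - E2 (Suc k)))\<^sup>2"
  have sweep: "lag_after_sweep (Suc k) + sweep_gap (Suc k) \<le> lag_seq (Suc k)"
    by (rule sweep_descent[OF assms cu_ge cq_ge cw_ge])
  have "Z1 (Suc (Suc k)) - Z1 (Suc k) = r1 *\<^sub>R (E1 (Suc (Suc k)) - E1 (Suc k))"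
    and "Z2 (Suc (Suc k)) - Z2 (Suc k) = r2 *\<^sub>R (E2 (Suc (Suc k)) - E2 (Suc k))"
    by (simp_all add: Z1_eq Z2_eq algebra_simps)
  then have "lag_seq (Suc (Suc k)) = lag_after_sweep (Suc k) + r1\<^sup>2 / mu * dE1 + r2\<^sup>2 / mu * dE2"
    using lag_seq_Suc[of "Suc k"] pos
    by (simp add: dE1_def dE2_def power_mult_distrib add_divide_distrib)
  moreover have "sweep_gap (Suc k) = dU + dQ + dW + (l2/2) * dOm + ((r1 + mu)/2) * dE1 + ((r2 + mu)/2) * dE2"
    by (simp add: sweep_gap_def dOm_def dU_def dQ_def dW_def dE1_def dE2_def)
  moreover have "descent_rate * (norm (primal (Suc (Suc k)) - primal (Suc k)))\<^sup>2
      \<le> dU + dQ + dW + (l2/2) * dOm + ((r1 + mu)/2 - r1\<^sup>2/mu) * dE1 + ((r2 + mu)/2 - r2\<^sup>2/mu) * dE2"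
  proof -
    note rate = descent_rate_le
    have "0 \<le> dOm" "0 \<le> dU" "0 \<le> dQ" "0 \<le> dW" "0 \<le> dE1" "0 \<le> dE2"
      by (simp_all add: dOm_def dU_def dQ_def dW_def dE1_def dE2_def)
    then have scaled: "descent_rate * dOm \<le> (l2/2) * dOm" "descent_rate * dU \<le> dU" "descent_rate * dQ \<le> dQ"
      "descent_rate * dW \<le> dW" "descent_rate * dE1 \<le> ((r1 + mu)/2 - r1\<^sup>2/mu) * dE1"
      "descent_rate * dE2 \<le> ((r2 + mu)/2 - r2\<^sup>2/mu) * dE2"
      using mult_right_mono[OF rate(1)] mult_right_mono[OF rate(2)] mult_right_mono[OF rate(3)]
        mult_right_mono[OF rate(4)] by simp_all
    have "(norm (primal (Suc (Suc k)) - primal (Suc k)))\<^sup>2 = dOm + dU + dQ + dW + dE1 + dE2"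
      by (simp add: primal_def power2_norm_Pair dOm_def dU_def dQ_def dW_def dE1_def dE2_def)
    then have "descent_rate * (norm (primal (Suc (Suc k)) - primal (Suc k)))\<^sup>2
        = descent_rate * dOm + descent_rate * dU + descent_rate * dQ + descent_rate * dW
          + descent_rate * dE1 + descent_rate * dE2"
      by (simp add: distrib_left)
    then show ?thesis using scaled by linarith
  qed
  ultimately show ?thesis using sweep by (simp add: algebra_simps)
qed

text \<open>Once the multipliers equal the scaled slacks, the augmented Lagrangian controls the dual
  energy; r < mu is what makes the coercivity constants r/2 - r^2/(2 mu) positive.\<close>
lemma dual_energy_le_lag_seq:
  "dual_energy (Suc k) \<le> dual_ratio * lag_seq (Suc k)" "0 \<le> lag_seq (Suc k)"
proof -
  define x1 x2 where "x1 = (norm (E1 (Suc k)))\<^sup>2" and "x2 = (norm (E2 (Suc k)))\<^sup>2"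
  define a1 a2 where "a1 = r1 * (mu - r1) / (2 * mu)" and "a2 = r2 * (mu - r2) / (2 * mu)"
  have a_pos: "0 < a1" "0 < a2" using pos mu_gt by (simp_all add: a1_def a2_def)
  have a_eq: "r1/2 - r1\<^sup>2/(2*mu) = a1" "r2/2 - r2\<^sup>2/(2*mu) = a2"
    using pos by (simp_all add: a1_def a2_def field_simps power2_eq_square)
  have ratio: "r1\<^sup>2/(2*mu) = r1 / (mu - r1) * a1" "r2\<^sup>2/(2*mu) = r2 / (mu - r2) * a2"
    using pos mu_gt by (simp_all add: a1_def a2_def power2_eq_square)
  have energy: "dual_energy (Suc k) = r1\<^sup>2/(2*mu) * x1 + r2\<^sup>2/(2*mu) * x2"
    using pos by (simp add: dual_energy_def Z1_eq Z2_eq x1_def x2_def power_mult_distrib add_divide_distrib)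
  have "0 \<le> l1 * l1norm (U (Suc k)) + (d1/2) * (norm (Q (Suc k)))\<^sup>2 + (d2/2) * (norm (W (Suc k)))\<^sup>2
      + (l2/2) * (norm (Om (Suc k)))\<^sup>2"
    using pos l1norm_nonneg[of "U (Suc k)"] by simp
  then have lower: "a1 * x1 + a2 * x2 \<le> lag_seq (Suc k)"
    using lag_coercive[of "U (Suc k)" "Q (Suc k)" "W (Suc k)" "Om (Suc k)" "E1 (Suc k)" "E2 (Suc k)"
        "Z1 (Suc k)" "Z2 (Suc k)"] energy
    unfolding lag_seq_def dual_energy_def x1_def x2_def a_eq[symmetric] by (simp add: algebra_simps)
  have "0 \<le> a1 * x1" "0 \<le> a2 * x2" using a_pos by (simp_all add: x1_def x2_def)
  then show "0 \<le> lag_seq (Suc k)" using lower by linarith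
  have "r1 / (mu - r1) * (a1 * x1) \<le> dual_ratio * (a1 * x1)" "r2 / (mu - r2) * (a2 * x2) \<le> dual_ratio * (a2 * x2)"
    using \<open>0 \<le> a1 * x1\<close> \<open>0 \<le> a2 * x2\<close> pos mu_gt
    by (intro mult_right_mono; simp add: dual_ratio_def)+
  moreover have "dual_ratio * (a1 * x1) + dual_ratio * (a2 * x2) \<le> dual_ratio * lag_seq (Suc k)"
    using mult_left_mono[OF lower dual_ratio_nonneg] by (simp add: distrib_left)
  ultimately show "dual_energy (Suc k) \<le> dual_ratio * lag_seq (Suc k)"
    unfolding energy ratio by (simp add: mult.assoc)
qed

lemma lyapunov_bounded: "lag_seq k + dual_energy k \<le> LS"
proof -
  have bounded_if: "lag_seq (Suc j) + dual_energy (Suc j) \<le> LS" if "lag_seq (Suc j) \<le> first_step_bound" for j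
  proof -
    have "lag_seq (Suc j) + dual_energy (Suc j) \<le> (1 + dual_ratio) * lag_seq (Suc j)"
      using dual_energy_le_lag_seq[of j] by (simp add: algebra_simps)
    also have "\<dots> \<le> (1 + dual_ratio) * first_step_bound"
      using that dual_ratio_nonneg by (simp add: mult_left_mono)
    finally show ?thesis using LS_later by linarith
  qed
  have invariant: "lag_seq (Suc j) \<le> first_step_bound" for j
  proof (induction j)
    case 0
    show ?case using first_step_bounded by simp
  next
    case (Suc j)
    have "0 \<le> descent_rate * (norm (primal (Suc (Suc j)) - primal (Suc j)))\<^sup>2"
      using descent_rate_pos by simp
    then show ?case using later_descent[OF bounded_if[OF Suc]] Suc by linarith
  qed
  show ?thesis
    using LS_init bounded_if[OF invariant] by (cases k) simp_all
qed

lemma sufficient_descent: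
  "lag_seq (Suc (Suc k)) + descent_rate * (norm (primal (Suc (Suc k)) - primal (Suc k)))\<^sup>2
    \<le> lag_seq (Suc k)"
  by (rule later_descent[OF lyapunov_bounded])

lemma primal_steps_vanish: "(\<lambda>k. primal (Suc k) - primal k) \<longlonglongrightarrow> 0"
proof -
  have "(\<lambda>k. primal (Suc (Suc k)) - primal (Suc k)) \<longlonglongrightarrow> 0"
  proof (rule steps_tendsto_zero_of_descent[where L = "\<lambda>k. lag_seq (Suc k)"])
    show "descent_rate * (norm (primal (Suc (Suc k)) - primal (Suc k)))\<^sup>2
        \<le> lag_seq (Suc k) - lag_seq (Suc (Suc k))" for k
      using sufficient_descent[of k] by linarith
  qed (use descent_rate_pos dual_energy_le_lag_seq(2) in auto)
  then show ?thesis by (rule LIMSEQ_imp_Suc)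
qed

lemma iter_steps_vanish: "(\<lambda>k. iter (Suc k) - iter k) \<longlonglongrightarrow> 0"
proof -
  have primal_parts: "(\<lambda>k. Om (Suc k) - Om k) \<longlonglongrightarrow> 0" "(\<lambda>k. U (Suc k) - U k) \<longlonglongrightarrow> 0"
    "(\<lambda>k. Q (Suc k) - Q k) \<longlonglongrightarrow> 0" "(\<lambda>k. W (Suc k) - W k) \<longlonglongrightarrow> 0"
    "(\<lambda>k. E1 (Suc k) - E1 k) \<longlonglongrightarrow> 0" "(\<lambda>k. E2 (Suc k) - E2 k) \<longlonglongrightarrow> 0"
    using primal_steps_vanish by (simp_all add: primal_def zero_prod_def tendsto_Pair_iff)
  have "(\<lambda>k. r1 *\<^sub>R (E1 (Suc (Suc k)) - E1 (Suc k))) \<longlonglongrightarrow> r1 *\<^sub>R 0"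
    by (intro tendsto_scaleR tendsto_const LIMSEQ_Suc[OF primal_parts(5)])
  then have "(\<lambda>k. Z1 (Suc (Suc k)) - Z1 (Suc k)) \<longlonglongrightarrow> 0"
    by (simp add: Z1_eq scaleR_diff_right)
  then have Z1_part: "(\<lambda>k. Z1 (Suc k) - Z1 k) \<longlonglongrightarrow> 0" by (rule LIMSEQ_imp_Suc)
  have "(\<lambda>k. r2 *\<^sub>R (E2 (Suc (Suc k)) - E2 (Suc k))) \<longlonglongrightarrow> r2 *\<^sub>R 0"
    by (intro tendsto_scaleR tendsto_const LIMSEQ_Suc[OF primal_parts(6)])
  then have "(\<lambda>k. Z2 (Suc (Suc k)) - Z2 (Suc k)) \<longlonglongrightarrow> 0"
    by (simp add: Z2_eq scaleR_diff_right)
  then have Z2_part: "(\<lambda>k. Z2 (Suc k) - Z2 k) \<longlonglongrightarrow> 0" by (rule LIMSEQ_imp_Suc)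
  show ?thesis
    using primal_parts Z1_part Z2_part by (simp add: iter_def zero_prod_def tendsto_Pair_iff)
qed


lemma step_constants_pos: "0 < cu" "0 < cq" "0 < cw"
  using lip_nonneg[of "2 * LS / d1" "2 * LS / d2"] lip_nonneg[of "(LS / l1)\<^sup>2" "2 * LS / d2"]
    lip_nonneg[of "2 * LS / d1" "(LS / l1)\<^sup>2"] cu_ge cq_ge cw_ge
    components_bounded(7)[OF lyapunov_bounded[of 0, unfolded lag_seq_def dual_energy_def]] pos
  by simp_all


lemma gradQ_eq_step:
  "gradQ (U (Suc k)) (Q k) (W k) (E1 k) (E2 k) (Z1 k) (Z2 k) = cq *\<^sub>R (Q k - Q (Suc k))"
  using step_constants_pos(2) by (simp add: Q_update)

lemma gradW_eq_step: "gradW (U (Suc k)) (Q (Suc k)) (W k) (E2 k) (Z2 k) = cw *\<^sub>R (W k - W (Suc k))"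
  using step_constants_pos(3) by (simp add: W_update)

lemma residuals_eq_dual_steps:
  "H - Q (Suc k) ** U (Suc k) - E1 (Suc k) = (1 / mu) *\<^sub>R (Z1 (Suc k) - Z1 k)"
  "Y - W (Suc k) ** Q (Suc k) ** U (Suc k) - E2 (Suc k) = (1 / mu) *\<^sub>R (Z2 (Suc k) - Z2 k)"
  using pos by (simp_all add: Z1_step Z2_step)

lemma limit_point_components:
  assumes phi: "strict_mono phi"
    and lim: "(iter \<circ> phi) \<longlonglongrightarrow> (Oms, Us, Qs, Ws, e1s, e2s, Z1s, Z2s)"
  shows "(\<lambda>j. Om (phi j)) \<longlonglongrightarrow> Oms" "(\<lambda>j. U (phi j)) \<longlonglongrightarrow> Us"
    "(\<lambda>j. Q (phi j)) \<longlonglongrightarrow> Qs" "(\<lambda>j. W (phi j)) \<longlonglongrightarrow> Ws"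
    "(\<lambda>j. E1 (phi j)) \<longlonglongrightarrow> e1s" "(\<lambda>j. E2 (phi j)) \<longlonglongrightarrow> e2s"
    "(\<lambda>j. Z1 (phi j)) \<longlonglongrightarrow> Z1s" "(\<lambda>j. Z2 (phi j)) \<longlonglongrightarrow> Z2s"
    and "(\<lambda>j. Om (Suc (phi j))) \<longlonglongrightarrow> Oms" "(\<lambda>j. U (Suc (phi j))) \<longlonglongrightarrow> Us"
    "(\<lambda>j. Q (Suc (phi j))) \<longlonglongrightarrow> Qs" "(\<lambda>j. W (Suc (phi j))) \<longlonglongrightarrow> Ws"
    "(\<lambda>j. E1 (Suc (phi j))) \<longlonglongrightarrow> e1s" "(\<lambda>j. E2 (Suc (phi j))) \<longlonglongrightarrow> e2s"
    "(\<lambda>j. Z1 (Suc (phi j))) \<longlonglongrightarrow> Z1s" "(\<lambda>j. Z2 (Suc (phi j))) \<longlonglongrightarrow> Z2s"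
proof -
  have "(\<lambda>j. iter (Suc (phi j))) \<longlonglongrightarrow> (Oms, Us, Qs, Ws, e1s, e2s, Z1s, Z2s)"
    by (rule LIMSEQ_Suc_subseq[OF lim iter_steps_vanish phi])
  then show "(\<lambda>j. Om (Suc (phi j))) \<longlonglongrightarrow> Oms" "(\<lambda>j. U (Suc (phi j))) \<longlonglongrightarrow> Us"
    "(\<lambda>j. Q (Suc (phi j))) \<longlonglongrightarrow> Qs" "(\<lambda>j. W (Suc (phi j))) \<longlonglongrightarrow> Ws"
    "(\<lambda>j. E1 (Suc (phi j))) \<longlonglongrightarrow> e1s" "(\<lambda>j. E2 (Suc (phi j))) \<longlonglongrightarrow> e2s"
    "(\<lambda>j. Z1 (Suc (phi j))) \<longlonglongrightarrow> Z1s" "(\<lambda>j. Z2 (Suc (phi j))) \<longlonglongrightarrow> Z2s"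
    by (simp_all add: iter_def tendsto_Pair_iff)
  show "(\<lambda>j. Om (phi j)) \<longlonglongrightarrow> Oms" "(\<lambda>j. U (phi j)) \<longlonglongrightarrow> Us"
    "(\<lambda>j. Q (phi j)) \<longlonglongrightarrow> Qs" "(\<lambda>j. W (phi j)) \<longlonglongrightarrow> Ws"
    "(\<lambda>j. E1 (phi j)) \<longlonglongrightarrow> e1s" "(\<lambda>j. E2 (phi j)) \<longlonglongrightarrow> e2s"
    "(\<lambda>j. Z1 (phi j)) \<longlonglongrightarrow> Z1s" "(\<lambda>j. Z2 (phi j)) \<longlonglongrightarrow> Z2s"
    using lim by (simp_all add: iter_def o_def tendsto_Pair_iff)
qed

lemma limit_point_block_stationary:
  assumes "strict_mono phi"
    and "(iter \<circ> phi) \<longlonglongrightarrow> (Oms, Us, Qs, Ws, e1s, e2s, Z1s, Z2s)"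
  shows "gradOm Oms Us = 0" "gradQ Us Qs Ws e1s e2s Z1s Z2s = 0" "gradW Us Qs Ws e2s Z2s = 0"
    "grade1 Us Qs e1s Z1s = 0" "grade2 Us Qs Ws e2s Z2s = 0"
    "H = Qs ** Us + e1s" "Y = Ws ** Qs ** Us + e2s"
proof -
  note current = limit_point_components(1-8)[OF assms]
    and shifted = limit_point_components(9-16)[OF assms]
  have "(\<lambda>j. gradOm (Om (Suc (phi j))) (U (Suc (phi j)))) \<longlonglongrightarrow> gradOm Oms Us"
    unfolding gradOm_def by (intro tendsto_intros shifted)
  then show "gradOm Oms Us = 0" by (simp add: gradOm_vanishes LIMSEQ_const_iff)
  have "(\<lambda>j. grade1 (U (Suc (phi j))) (Q (Suc (phi j))) (E1 (Suc (phi j))) (Z1 (phi j)))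
      \<longlonglongrightarrow> grade1 Us Qs e1s Z1s"
    unfolding grade1_def by (intro tendsto_intros shifted current)
  then show "grade1 Us Qs e1s Z1s = 0" by (simp add: grade1_vanishes LIMSEQ_const_iff)
  have "(\<lambda>j. grade2 (U (Suc (phi j))) (Q (Suc (phi j))) (W (Suc (phi j))) (E2 (Suc (phi j))) (Z2 (phi j)))
      \<longlonglongrightarrow> grade2 Us Qs Ws e2s Z2s"
    unfolding grade2_def by (intro tendsto_intros shifted current)
  then show "grade2 Us Qs Ws e2s Z2s = 0" by (simp add: grade2_vanishes LIMSEQ_const_iff)
  have "(\<lambda>j. gradQ (U (Suc (phi j))) (Q (phi j)) (W (phi j)) (E1 (phi j)) (E2 (phi j)) (Z1 (phi j)) (Z2 (phi j)))
      \<longlonglongrightarrow> gradQ Us Qs Ws e1s e2s Z1s Z2s"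
    unfolding gradQ_def by (intro tendsto_intros shifted current)
  moreover have "(\<lambda>j. gradQ (U (Suc (phi j))) (Q (phi j)) (W (phi j)) (E1 (phi j)) (E2 (phi j)) (Z1 (phi j)) (Z2 (phi j)))
      \<longlonglongrightarrow> cq *\<^sub>R (Qs - Qs)"
    unfolding gradQ_eq_step by (intro tendsto_intros shifted current)
  ultimately show "gradQ Us Qs Ws e1s e2s Z1s Z2s = 0" by (simp add: LIMSEQ_unique)
  have "(\<lambda>j. gradW (U (Suc (phi j))) (Q (Suc (phi j))) (W (phi j)) (E2 (phi j)) (Z2 (phi j)))
      \<longlonglongrightarrow> gradW Us Qs Ws e2s Z2s"
    unfolding gradW_def by (intro tendsto_intros shifted current)
  moreover have "(\<lambda>j. gradW (U (Suc (phi j))) (Q (Suc (phi j))) (W (phi j)) (E2 (phi j)) (Z2 (phi j)))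
      \<longlonglongrightarrow> cw *\<^sub>R (Ws - Ws)"
    unfolding gradW_eq_step by (intro tendsto_intros shifted current)
  ultimately show "gradW Us Qs Ws e2s Z2s = 0" by (simp add: LIMSEQ_unique)
  have "(\<lambda>j. H - Q (Suc (phi j)) ** U (Suc (phi j)) - E1 (Suc (phi j))) \<longlonglongrightarrow> H - Qs ** Us - e1s"
    by (intro tendsto_intros shifted)
  moreover have "(\<lambda>j. H - Q (Suc (phi j)) ** U (Suc (phi j)) - E1 (Suc (phi j))) \<longlonglongrightarrow> (1 / mu) *\<^sub>R (Z1s - Z1s)"
    unfolding residuals_eq_dual_steps by (intro tendsto_intros shifted current)
  ultimately have "H - Qs ** Us - e1s = (1 / mu) *\<^sub>R (Z1s - Z1s)" by (rule LIMSEQ_unique)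
  then show "H = Qs ** Us + e1s" by (simp add: algebra_simps)
  have "(\<lambda>j. Y - W (Suc (phi j)) ** Q (Suc (phi j)) ** U (Suc (phi j)) - E2 (Suc (phi j)))
      \<longlonglongrightarrow> Y - Ws ** Qs ** Us - e2s"
    by (intro tendsto_intros shifted)
  moreover have "(\<lambda>j. Y - W (Suc (phi j)) ** Q (Suc (phi j)) ** U (Suc (phi j)) - E2 (Suc (phi j)))
      \<longlonglongrightarrow> (1 / mu) *\<^sub>R (Z2s - Z2s)"
    unfolding residuals_eq_dual_steps by (intro tendsto_intros shifted current)
  ultimately have "Y - Ws ** Qs ** Us - e2s = (1 / mu) *\<^sub>R (Z2s - Z2s)" by (rule LIMSEQ_unique)
  then show "Y = Ws ** Qs ** Us + e2s" by (simp add: algebra_simps)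
qed

lemma limit_point_prox:
  assumes "strict_mono phi"
    and "(iter \<circ> phi) \<longlonglongrightarrow> (Oms, Us, Qs, Ws, e1s, e2s, Z1s, Z2s)"
  shows "l1 * l1norm Us + inner (- gradU Oms Us Qs Ws e1s e2s Z1s Z2s) (V - Us) \<le> l1 * l1norm V"
proof -
  note current = limit_point_components(1-8)[OF assms]
    and shifted = limit_point_components(9-16)[OF assms]
  have "(\<lambda>j. l1 * l1norm (U (Suc (phi j))) + inner (- gradU (Om (phi j)) (U (phi j)) (Q (phi j))
        (W (phi j)) (E1 (phi j)) (E2 (phi j)) (Z1 (phi j)) (Z2 (phi j))
        - cu *\<^sub>R (U (Suc (phi j)) - U (phi j))) (V - U (Suc (phi j))))
      \<longlonglongrightarrow> l1 * l1norm Us + inner (- gradU Oms Us Qs Ws e1s e2s Z1s Z2s - cu *\<^sub>R (Us - Us)) (V - Us)"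
    unfolding gradU_def by (intro tendsto_intros shifted current)
  moreover have "l1 * l1norm (U (Suc k)) + inner (- gradU (Om k) (U k) (Q k) (W k) (E1 k) (E2 k) (Z1 k) (Z2 k)
        - cu *\<^sub>R (U (Suc k) - U k)) (V - U (Suc k)) \<le> l1 * l1norm V" for k
    by (rule prox_gradient_step[OF step_constants_pos(1) _ U_update]) (use pos in simp)
  ultimately show ?thesis by (simp add: LIMSEQ_le_const2)
qed

definition radius :: real where
  "radius = thnorm (iter 0) + 1 + 2 * LS / d1 + 2 * LS / d2 + LS / l1 + 2 * LS / l2
     + (1 + r1) * (1 + 2 * LS / r1) + (1 + r2) * (1 + 2 * LS / r2)"

lemma iterates_bounded: "thnorm (iter k) \<le> radius"
proof -
  have "0 \<le> LS"
    using components_bounded(7)[OF lyapunov_bounded[of 0, unfolded lag_seq_def dual_energy_def]] .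
  then have terms: "0 \<le> 2 * LS / d1" "0 \<le> 2 * LS / d2" "0 \<le> LS / l1" "0 \<le> 2 * LS / l2"
    "0 \<le> 1 + 2 * LS / r1" "0 \<le> 1 + 2 * LS / r2" "0 \<le> r1 * (1 + 2 * LS / r1)" "0 \<le> r2 * (1 + 2 * LS / r2)"
    "(1 + r1) * (1 + 2 * LS / r1) = (1 + 2 * LS / r1) + r1 * (1 + 2 * LS / r1)"
    "(1 + r2) * (1 + 2 * LS / r2) = (1 + 2 * LS / r2) + r2 * (1 + 2 * LS / r2)"
    using pos by (simp_all add: distrib_right)
  show ?thesis
  proof (cases k)
    case 0
    show ?thesis unfolding 0 radius_def using terms by linarith
  next
    case (Suc j)
    note bounds = components_bounded[OF lyapunov_bounded[of k, unfolded lag_seq_def dual_energy_def]]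
    have E1_bound: "norm (E1 k) \<le> 1 + 2 * LS / r1" and E2_bound: "norm (E2 k) \<le> 1 + 2 * LS / r2"
      by (rule norm_le_one_plus_of_power2_le, rule bounds(5)) (rule norm_le_one_plus_of_power2_le, rule bounds(6))
    have "norm (Z1 k) \<le> r1 * (1 + 2 * LS / r1)" "norm (Z2 k) \<le> r2 * (1 + 2 * LS / r2)"
      using mult_left_mono[OF E1_bound, of r1] mult_left_mono[OF E2_bound, of r2] pos
      by (simp_all add: Suc Z1_eq Z2_eq)
    moreover have "0 \<le> thnorm (iter 0)" by (rule thnorm_nonneg)
    ultimately show ?thesis
      using norm_le_one_plus_of_power2_le[OF bounds(1)] norm_le_one_plus_of_power2_le[OF bounds(2)]
        bounds(3) norm_le_one_plus_of_power2_le[OF bounds(4)] E1_bound E2_bound terms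
      unfolding iter_def thnorm_tuple max.bounded_iff radius_def by (intro conjI; linarith)
  qed
qed

lemma limit_point_in_Sset:
  assumes "strict_mono phi" and lim: "(iter \<circ> phi) \<longlonglongrightarrow> Ths" and "radius < R"
  shows "Ths \<in> Sset X H Y l1 l2 r1 r2 d1 d2 mu R"
proof -
  obtain Oms Us Qs Ws e1s e2s Z1s Z2s where Ths: "Ths = (Oms, Us, Qs, Ws, e1s, e2s, Z1s, Z2s)"
    by (metis prod.collapse)
  have "(\<lambda>j. thnorm (iter (phi j))) \<longlonglongrightarrow> thnorm Ths"
    using tendsto_thnorm[OF lim] by (simp add: o_def)
  then have "thnorm Ths \<le> radius" by (rule LIMSEQ_le_const2) (simp add: iterates_bounded)
  note stationary = limit_point_block_stationary[OF assms(1) lim[unfolded Ths]]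
    limit_point_prox[OF assms(1) lim[unfolded Ths]]
  show ?thesis
    unfolding Ths
    by (rule stationary_in_Sset) (use \<open>thnorm Ths \<le> radius\<close> assms(3) stationary Ths in auto)
qed

lemma thdist_Sset_tendsto_zero:
  assumes "radius < R"
  shows "(\<lambda>k. thdist (iter k) (Sset X H Y l1 l2 r1 r2 d1 d2 mu R)) \<longlonglongrightarrow> 0"
proof -
  let ?S = "Sset X H Y l1 l2 r1 r2 d1 d2 mu R :: ('m,'n,'r,'s,'c) theta set"
  have "bounded (range iter)"
    unfolding bounded_iff
  proof (intro exI ballI)
    fix x assume "x \<in> range iter"
    then obtain k where "x = iter k" by blast
    then show "norm x \<le> 3 * radius" using norm_le_thnorm[of "iter k"] iterates_bounded[of k] by simp
  qed
  then obtain phi l where "strict_mono phi" "(iter \<circ> phi) \<longlonglongrightarrow> l"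
    using bounded_imp_convergent_subsequence by blast
  then have "l \<in> ?S" using assms by (rule limit_point_in_Sset)
  then have nonempty: "?S \<noteq> {}" by blast
  have "(\<lambda>k. infdist (iter k) ?S) \<longlonglongrightarrow> 0"
    using \<open>bounded (range iter)\<close>
  proof (rule infdist_to_limit_points_tendsto_zero)
    fix phi l assume "strict_mono phi" "(iter \<circ> phi) \<longlonglongrightarrow> l"
    then show "l \<in> ?S" using assms by (rule limit_point_in_Sset)
  qed
  moreover have "\<forall>\<^sub>F k in sequentially. 0 \<le> thdist (iter k) ?S"
    "\<forall>\<^sub>F k in sequentially. thdist (iter k) ?S \<le> infdist (iter k) ?S"
    by (simp_all add: thdist_nonneg[OF nonempty] thdist_le_infdist[OF nonempty])
  ultimately show ?thesis by (rule real_tendsto_sandwich[OF _ _ tendsto_const, rotated 2])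
qed

end

lemma less_of_sqrt2_max_le:
  fixes a b m :: real
  assumes "0 < a" "0 < b" "sqrt 2 * max a b \<le> m"
  shows "a < m" "b < m"
proof -
  have "1 * max a b < sqrt 2 * max a b"
    using assms(1) by (intro mult_strict_right_mono) (auto simp: less_max_iff_disj)
  then show "a < m" "b < m" using assms(3) by (simp_all add: max_def split: if_splits)
qed

theorem corollary1:
  fixes X :: "real^'n^'m" and H :: "real^'n^'s" and Y :: "real^'n^'c"
    and l1 l2 r1 r2 d1 d2 mu :: real
    and Om0 :: "real^'m^'r" and U0 :: "real^'n^'r" and Q0 :: "real^'r^'s"
    and W0 :: "real^'s^'c" and E10 :: "real^'n^'s" and E20 :: "real^'n^'c"
    and Z10 :: "real^'n^'s" and Z20 :: "real^'n^'c"
  assumes pos: "l1 > 0" "l2 > 0" "r1 > 0" "r2 > 0" "d1 > 0" "d2 > 0" "mu > 0"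
    and mu_ge: "mu \<ge> sqrt 2 * max r1 r2"
  shows "\<exists>etaU0 etaQ0 etaW0 R. etaU0 > 0 \<and> etaQ0 > 0 \<and> etaW0 > 0 \<and> R > 0 \<and>
    (\<forall>etaU etaQ etaW
      (Om :: nat \<Rightarrow> real^'m^'r) (U :: nat \<Rightarrow> real^'n^'r) (Q :: nat \<Rightarrow> real^'r^'s)
      (W :: nat \<Rightarrow> real^'s^'c) (E1 :: nat \<Rightarrow> real^'n^'s) (E2 :: nat \<Rightarrow> real^'n^'c)
      (Z1 :: nat \<Rightarrow> real^'n^'s) (Z2 :: nat \<Rightarrow> real^'n^'c).
      etaU > etaU0 \<and> etaQ > etaQ0 \<and> etaW > etaW0
      \<and> Om 0 = Om0 \<and> U 0 = U0 \<and> Q 0 = Q0 \<and> W 0 = W0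
      \<and> E1 0 = E10 \<and> E2 0 = E20 \<and> Z1 0 = Z10 \<and> Z2 0 = Z20
      \<and> (\<forall>k. U (Suc k) = soft (l1 / (mu * etaU))
              (U k - (1 / (mu * etaU)) *\<^sub>R
                 grad (\<lambda>V. Ls X H Y l2 r1 r2 d1 d2 mu (Om k) V (Q k) (W k) (E1 k) (E2 k) (Z1 k) (Z2 k)) (U k)))
      \<and> (\<forall>k. Q (Suc k) = Q k - (1 / (mu * etaQ)) *\<^sub>R
              grad (\<lambda>V. Lag X H Y l1 l2 r1 r2 d1 d2 mu (Om k) (U (Suc k)) V (W k) (E1 k) (E2 k) (Z1 k) (Z2 k)) (Q k))
      \<and> (\<forall>k. W (Suc k) = W k - (1 / (mu * etaW)) *\<^sub>R
              grad (\<lambda>V. Lag X H Y l1 l2 r1 r2 d1 d2 mu (Om k) (U (Suc k)) (Q (Suc k)) V (E1 k) (E2 k) (Z1 k) (Z2 k)) (W k))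
      \<and> (\<forall>k V. Lag X H Y l1 l2 r1 r2 d1 d2 mu (Om (Suc k)) (U (Suc k)) (Q (Suc k)) (W (Suc k)) (E1 k) (E2 k) (Z1 k) (Z2 k)
              \<le> Lag X H Y l1 l2 r1 r2 d1 d2 mu V (U (Suc k)) (Q (Suc k)) (W (Suc k)) (E1 k) (E2 k) (Z1 k) (Z2 k))
      \<and> (\<forall>k V. Lag X H Y l1 l2 r1 r2 d1 d2 mu (Om (Suc k)) (U (Suc k)) (Q (Suc k)) (W (Suc k)) (E1 (Suc k)) (E2 k) (Z1 k) (Z2 k)
              \<le> Lag X H Y l1 l2 r1 r2 d1 d2 mu (Om (Suc k)) (U (Suc k)) (Q (Suc k)) (W (Suc k)) V (E2 k) (Z1 k) (Z2 k))
      \<and> (\<forall>k V. Lag X H Y l1 l2 r1 r2 d1 d2 mu (Om (Suc k)) (U (Suc k)) (Q (Suc k)) (W (Suc k)) (E1 (Suc k)) (E2 (Suc k)) (Z1 k) (Z2 k)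
              \<le> Lag X H Y l1 l2 r1 r2 d1 d2 mu (Om (Suc k)) (U (Suc k)) (Q (Suc k)) (W (Suc k)) (E1 (Suc k)) V (Z1 k) (Z2 k))
      \<and> (\<forall>k. Z1 (Suc k) = Z1 k + mu *\<^sub>R (H - Q (Suc k) ** U (Suc k) - E1 (Suc k)))
      \<and> (\<forall>k. Z2 (Suc k) = Z2 k + mu *\<^sub>R (Y - W (Suc k) ** Q (Suc k) ** U (Suc k) - E2 (Suc k)))
      \<longrightarrow>
      (let Th = (\<lambda>k. (Om k, U k, Q k, W k, E1 k, E2 k, Z1 k, Z2 k));
           S = Sset X H Y l1 l2 r1 r2 d1 d2 mu R
       in (\<forall>k. thnorm (Th k) < R)
          \<and> (\<forall>(phi :: nat \<Rightarrow> nat) Ths. strict_mono phi \<and> (Th \<circ> phi) \<longlonglongrightarrow> Ths \<longrightarrow> Ths \<in> S)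
          \<and> ((\<lambda>k. thdist (Th k) S) \<longlonglongrightarrow> 0)))"
proof -
  interpret adm_problem X H Y l1 l2 r1 r2 d1 d2 mu using pos by unfold_locales
  note mu_gt = less_of_sqrt2_max_le[OF pos(3,4) mu_ge]
  define P0 where "P0 = \<L> Om0 U0 Q0 W0 E10 E20 Z10 Z20 + ((norm Z10)\<^sup>2 + (norm Z20)\<^sup>2) / (2 * mu)"
  define LS where "LS = max P0 ((1 + (r1 / (mu - r1) + r2 / (mu - r2)))
    * (\<L> Om0 U0 Q0 W0 E10 E20 Z10 Z20 + 4 * (((norm Z10)\<^sup>2 + (norm Z20)\<^sup>2) / (2 * mu))
       + 4 * (r1 + r2) / mu * P0))"
  define R where "R = thnorm (Om0, U0, Q0, W0, E10, E20, Z10, Z20) + 2 + 2 * LS / d1 + 2 * LS / d2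
    + LS / l1 + 2 * LS / l2 + (1 + r1) * (1 + 2 * LS / r1) + (1 + r2) * (1 + 2 * LS / r2)"
  have "0 \<le> P0" unfolding P0_def by (rule components_bounded(7)[OF order_refl])
  then have "0 \<le> LS" by (simp add: LS_def)
  then have "0 < R" and lip_nonneg: "0 \<le> lipU (2 * LS / d1) (2 * LS / d2)"
    "0 \<le> lipQ ((LS / l1)\<^sup>2) (2 * LS / d2)" "0 \<le> lipW (2 * LS / d1) ((LS / l1)\<^sup>2)"
    using pos thnorm_nonneg[of "(Om0, U0, Q0, W0, E10, E20, Z10, Z20)"]
    by (simp_all add: R_def lip_nonneg add_pos_nonneg)
  show ?thesis
    apply (rule exI[of _ "(lipU (2 * LS / d1) (2 * LS / d2) + 1) / mu"],
        rule exI[of _ "(lipQ ((LS / l1)\<^sup>2) (2 * LS / d2) + 1) / mu"],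
        rule exI[of _ "(lipW (2 * LS / d1) ((LS / l1)\<^sup>2) + 1) / mu"], rule exI[of _ R])
    apply (intro conjI allI impI)
        apply (use lip_nonneg pos \<open>0 < R\<close> in simp_all)
    subgoal premises iteration for etaU etaQ etaW Om U Q W E1 E2 Z1 Z2
    proof -
      have init: "Om 0 = Om0" "U 0 = U0" "Q 0 = Q0" "W 0 = W0" "E1 0 = E10" "E2 0 = E20"
        "Z1 0 = Z10" "Z2 0 = Z20"
        using iteration by blast+
      have step_bounds: "lipU (2 * LS / d1) (2 * LS / d2) + 1 \<le> mu * etaU"
        "lipQ ((LS / l1)\<^sup>2) (2 * LS / d2) + 1 \<le> mu * etaQ"
        "lipW (2 * LS / d1) ((LS / l1)\<^sup>2) + 1 \<le> mu * etaW"
        using iteration pos(7) by (simp_all add: pos_divide_less_eq mult.commute)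
      interpret adm_run X H Y l1 l2 r1 r2 d1 d2 mu "mu * etaU" "mu * etaQ" "mu * etaW"
        Om U Q W E1 E2 Z1 Z2
        using iteration by unfold_locales blast+
      interpret adm_run_bounded X H Y l1 l2 r1 r2 d1 d2 mu "mu * etaU" "mu * etaQ" "mu * etaW"
        Om U Q W E1 E2 Z1 Z2 LS
        using mu_gt step_bounds
        by unfold_locales (simp_all add: lag_seq_def dual_energy_def first_step_bound_def
            dual_ratio_def init LS_def P0_def)
      have "radius < R" by (simp add: radius_def R_def iter_def init)
      then have "thnorm (iter k) < R" for k using iterates_bounded[of k] by linarith
      moreover have "Ths \<in> Sset X H Y l1 l2 r1 r2 d1 d2 mu R"
        if "strict_mono phi" "(iter \<circ> phi) \<longlonglongrightarrow> Ths" for phi Ths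
        using that \<open>radius < R\<close> by (rule limit_point_in_Sset)
      moreover have "(\<lambda>k. thdist (iter k) (Sset X H Y l1 l2 r1 r2 d1 d2 mu R)) \<longlonglongrightarrow> 0"
        using \<open>radius < R\<close> by (rule thdist_Sset_tendsto_zero)
      ultimately show ?thesis unfolding Let_def iter_def[symmetric] by blast
    qed
    done
qed

end
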